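(* Assume [H-3] and let $T_0$ and $\bar R^i$ be as in the resolvent structure lemma. For $0\le t<s\le t+T_0$ and $v\in[0,1]$, set $u(v)=s-v(s-t)$ and $\bar R_v=\mathbb M_{s-t}^{-1}R^{\cdot,1}_{s,u(v)}$, i.e. the $nd\times d$ matrix with blocks $\frac{v^{k-1}}{(k-1)!}\bar R^k_{s,u(v)}$, $k=1,\dots,n$. There exists $C>0$ (depending on [H-3], $T_0$) such that for all $s\in[t,t+T_0]$ and all $p\in\mathbb R^{nd}$, $$\int_0^1|\bar R_v^*\mathbb M_{s-t}p|^\alpha\,dv\ge C|\mathbb M_{s-t}p|^\alpha.$$
   Context: $d,n\ge1$, $\alpha\in(0,2)$. $A_t$ has $d\times d$ blocks $a^{i,j}_t$ with $a^{i,j}_t=0$ if $j<i-1$, measurable and bounded in time; [H-3]: $\underline\alpha|\xi|^2\le\langle a^{i,i-1}_t\xi,\xi\rangle\le\overline\alpha|\xi|^2$ for $\xi\in\mathbb R^d$, $i\in\{2,\dots,n\}$, and $\|a^{i,j}_t\|\le\overline\alpha$. Resolvent $\frac{d}{ds}R_{s,t}=A_sR_{s,t}$, $R_{t,t}=I$; $R^{\cdot,1}_{s,t}$ its first $d$ columns. Resolvent structure lemma: there is $T_0\in(0,1]$ such that for $0\le t\le s\le t+T_0$, $R^{\cdot,1}_{s,t}$ has blocks $\frac{(s-t)^{i-1}}{(i-1)!}\bar R^i_{s,t}$ with $\bar R^i_{s,t}\in\mathbb R^d\otimes\mathbb R^d$ continuous, non-degenerate and bounded uniformly. $\mathbb M_u=\mathrm{Diag}(I_d,uI_d,\dots,u^{n-1}I_d)$.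 *)

theory Defs
  imports "HOL-Analysis.Analysis"
begin

text \<open>Vectors of R^m are functions nat => real of which only the
entries with index < m matter; m x m matrices are functions nat => nat => real
(row, column) of which only entries with indices < m matter.  The nd x nd
matrices are organised in d x d blocks indexed 0-based by i,j < n: block (i,j)
entry (a,b) sits at position (i*d+a, j*d+b).  (The paper's block i corresponds
to our block i-1.)\<close>

definition vnorm :: "nat \<Rightarrow> (nat \<Rightarrow> real) \<Rightarrow> real" where
  "vnorm m x = sqrt (\<Sum>j<m. (x j)\<^sup>2)"

definition blk :: "nat \<Rightarrow> (nat \<Rightarrow> nat \<Rightarrow> real) \<Rightarrow> nat \<Rightarrow> nat \<Rightarrow> (nat \<Rightarrow> nat \<Rightarrow> real)" where
  "blk d M i j = (\<lambda>a b. M (i*d+a) (j*d+b))"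

definition mulv :: "nat \<Rightarrow> (nat \<Rightarrow> nat \<Rightarrow> real) \<Rightarrow> (nat \<Rightarrow> real) \<Rightarrow> nat \<Rightarrow> real" where
  "mulv m M x = (\<lambda>a. \<Sum>b<m. M a b * x b)"

definition tmulv :: "nat \<Rightarrow> (nat \<Rightarrow> nat \<Rightarrow> real) \<Rightarrow> (nat \<Rightarrow> real) \<Rightarrow> nat \<Rightarrow> real" where
  "tmulv m M x = (\<lambda>b. \<Sum>a<m. M a b * x a)"

definition nondegenerate :: "nat \<Rightarrow> (nat \<Rightarrow> nat \<Rightarrow> real) \<Rightarrow> bool" where
  "nondegenerate d M \<longleftrightarrow> (\<forall>\<xi>. (\<forall>a<d. mulv d M \<xi> a = 0) \<longrightarrow> (\<forall>b<d. \<xi> b = 0))"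

text \<open>M_u p with M_u = Diag(I_d, u I_d, ..., u^(n-1) I_d)\<close>
definition scaleM :: "nat \<Rightarrow> real \<Rightarrow> (nat \<Rightarrow> real) \<Rightarrow> nat \<Rightarrow> real" where
  "scaleM d u p = (\<lambda>j. u ^ (j div d) * p j)"

definition H3 :: "nat \<Rightarrow> nat \<Rightarrow> real \<Rightarrow> real \<Rightarrow> (real \<Rightarrow> nat \<Rightarrow> nat \<Rightarrow> real) \<Rightarrow> bool" where
  "H3 n d al au A \<longleftrightarrow> 0 < al \<and>
     (\<forall>t\<ge>0.
       (\<forall>i<n. \<forall>j<n. j + 1 < i \<longrightarrow> (\<forall>a<d. \<forall>b<d. blk d (A t) i j a b = 0)) \<and>
       (\<forall>i\<in>{1..<n}. \<forall>\<xi>.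
          al * (vnorm d \<xi>)\<^sup>2 \<le> (\<Sum>a<d. \<Sum>b<d. blk d (A t) i (i-1) a b * \<xi> b * \<xi> a) \<and>
          (\<Sum>a<d. \<Sum>b<d. blk d (A t) i (i-1) a b * \<xi> b * \<xi> a) \<le> au * (vnorm d \<xi>)\<^sup>2) \<and>
       (\<forall>i<n. \<forall>j<n. \<forall>\<xi>. vnorm d (mulv d (blk d (A t) i j) \<xi>) \<le> au * vnorm d \<xi>))"

text \<open>R is the resolvent of A: for t >= 0, s |-> R s t is the (absolutely continuous)
solution of d/ds R_{s,t} = A_s R_{s,t}, R_{t,t} = I, written in integral form.\<close>
definition is_resolvent :: "nat \<Rightarrow> (real \<Rightarrow> nat \<Rightarrow> nat \<Rightarrow> real) \<Rightarrow> (real \<Rightarrow> real \<Rightarrow> nat \<Rightarrow> nat \<Rightarrow> real) \<Rightarrow> bool" where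
  "is_resolvent N A R \<longleftrightarrow> (\<forall>t\<ge>0. \<forall>k<N. \<forall>l<N.
      continuous_on {t..} (\<lambda>s. R s t k l) \<and>
      (\<forall>s\<ge>t. R s t k l = (if k = l then 1 else 0) + integral {t..s} (\<lambda>r. \<Sum>m<N. A r k m * R r t m l)))"

text \<open>\bar R_v: the nd x d matrix with (0-based) blocks v^k/k! \bar R^k_{s,u(v)}, u(v) = s - v(s-t)\<close>
definition Rbarv :: "nat \<Rightarrow> (nat \<Rightarrow> real \<Rightarrow> real \<Rightarrow> nat \<Rightarrow> nat \<Rightarrow> real) \<Rightarrow> real \<Rightarrow> real \<Rightarrow> real \<Rightarrow> nat \<Rightarrow> nat \<Rightarrow> real" where
  "Rbarv d Rb s t v = (\<lambda>j b. v ^ (j div d) / fact (j div d) * Rb (j div d) s (s - v * (s - t)) (j mod d) b)"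

end

theory Submission
  imports Defs
begin

text \<open>Put \<open>h = s - t\<close> and \<open>Z_v = M_h R^*_{s,s-vh} p\<close> for \<open>v \<in> [0,1]\<close>: the integrand is the first
  block of \<open>Z_v\<close>, and \<open>Z_0 = M_h p\<close>.  Conjugated by \<open>M_h\<close>, the coefficients of the resolvent
  equation are \<open>O(1/h)\<close> because \<open>A\<close> vanishes below its sub-diagonal blocks, so Gronwall over a
  time interval of length \<open>h\<close> gives bounds independent of \<open>t\<close> and \<open>s\<close>: the first block of \<open>Z_v\<close> is
  Lipschitz in \<open>v\<close>, and up to second order the increment of block \<open>j\<close> is driven by block \<open>j + 1\<close>
  through the sub-diagonal block of \<open>A\<close>, which is coercive by [H-3].  So if the first block were
  uniformly small compared with \<open>|M_h p|\<close>, then by induction on \<open>j\<close> every block would be small at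
  \<open>v = 0\<close>, which is absurd.  Hence the first block is large at some \<open>v\<close>, and by the Lipschitz bound
  on an interval of fixed length, which bounds the integral from below.\<close>

section \<open>Gronwall's inequality and block norms\<close>

lemma gronwall_inequality:
  fixes \<phi> :: "real \<Rightarrow> real"
  assumes cont: "continuous_on {a..b} \<phi>" and K: "K \<ge> 0"
    and le: "\<And>\<sigma>. \<sigma> \<in> {a..b} \<Longrightarrow> \<phi> \<sigma> \<le> c + K * integral {a..\<sigma>} \<phi>"
    and \<sigma>: "\<sigma> \<in> {a..b}"
  shows "\<phi> \<sigma> \<le> c * exp (K * (\<sigma> - a))"
proof -
  have a\<sigma>: "a \<le> \<sigma>" "\<sigma> \<le> b" using \<sigma> by auto
  have cont\<sigma>: "continuous_on {a..\<sigma>} \<phi>" using cont continuous_on_subset a\<sigma> by fastforce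
  define I where "I = (\<lambda>x. integral {a..x} \<phi>)"
  define \<psi> where "\<psi> = (\<lambda>x. exp (- K * (x - a)) * (c + K * I x))"
  have I_cont: "continuous_on {a..\<sigma>} I" unfolding I_def
    by (rule indefinite_integral_continuous_1[OF integrable_continuous_interval[OF cont\<sigma>]])
  have \<psi>_cont: "continuous_on {a..\<sigma>} \<psi>" unfolding \<psi>_def
    by (intro continuous_intros I_cont)
  \<comment> \<open>the integrating factor makes \<psi> non-increasing\<close>
  have "\<psi> \<sigma> \<le> \<psi> a"
  proof (rule DERIV_nonpos_imp_decreasing_open[OF a\<sigma>(1) _ \<psi>_cont])
    fix x assume x: "a < x" "x < \<sigma>"
    have dI: "(I has_real_derivative \<phi> x) (at x)"
      using integral_has_real_derivative[OF cont\<sigma>, of x] at_within_Icc_at[OF x] x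
      unfolding I_def by simp
    have "(\<psi> has_real_derivative exp (- K * (x - a)) * K * (\<phi> x - (c + K * I x))) (at x)"
      unfolding \<psi>_def by (auto intro!: derivative_eq_intros dI simp: algebra_simps)
    moreover have "\<phi> x - (c + K * I x) \<le> 0" using le[of x] x a\<sigma> unfolding I_def by auto
    then have "exp (- K * (x - a)) * K * (\<phi> x - (c + K * I x)) \<le> 0"
      using K by (simp add: mult_nonneg_nonpos)
    ultimately show "\<exists>y. (\<psi> has_real_derivative y) (at x) \<and> y \<le> 0" by blast
  qed
  moreover have "I a = 0" unfolding I_def by simp
  ultimately have "exp (- K * (\<sigma> - a)) * (c + K * I \<sigma>) \<le> c" unfolding \<psi>_def by simp
  then have "inverse (exp (K * (\<sigma> - a))) * (c + K * I \<sigma>) \<le> c" by (simp add: exp_minus)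
  then have "c + K * I \<sigma> \<le> c * exp (K * (\<sigma> - a))"
    by (simp add: field_simps)
  then show ?thesis using le[OF \<sigma>] unfolding I_def by simp
qed

lemma power_ratio_le:
  fixes h :: real
  assumes "0 < h" "h \<le> 1" "i \<le> m + k"
  shows "h ^ m / h ^ i \<le> 1 / h ^ k"
proof -
  have "h ^ (m + k) \<le> h ^ i" using assms by (intro power_decreasing) auto
  then have "h ^ m * h ^ k \<le> h ^ i" by (simp add: power_add)
  then show ?thesis using assms(1) by (simp add: divide_simps)
qed

lemma sum_nat_blocks:
  fixes f :: "nat \<Rightarrow> 'a::comm_monoid_add"
  shows "(\<Sum>m<n*d. f m) = (\<Sum>k<n. \<Sum>a<d. f (k*d + a))"
proof -
  have "(\<Sum>a<d. f (k*d + a)) = sum f {k*d..<k*d + d}" for k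
  proof -
    have "sum f {0 + k*d..<d + k*d} = (\<Sum>a = 0..<d. f (a + k*d))" by (rule sum.shift_bounds_nat_ivl)
    then show ?thesis by (simp add: atLeast0LessThan add.commute)
  qed
  then have "(\<Sum>k<n. \<Sum>a<d. f (k*d + a)) = (\<Sum>k<n. sum f {k*d..<k*d + d})" by simp
  also have "\<dots> = sum f {..<n*d}" by (rule sum.nat_group)
  finally show ?thesis by simp
qed

lemma block_index_less: "k < n \<Longrightarrow> a < d \<Longrightarrow> k*d + a < n*(d::nat)"
proof -
  assume "k < n" "a < d"
  then have "k*d + a < (k + 1)*d" by simp
  also have "\<dots> \<le> n*d" using \<open>k < n\<close> by (intro mult_right_mono) auto
  finally show ?thesis .
qed

lemma vnorm_nonneg: "0 \<le> vnorm d x"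
  unfolding vnorm_def by (simp add: sum_nonneg)

lemma power2_vnorm: "(vnorm d x)\<^sup>2 = (\<Sum>a<d. (x a)\<^sup>2)"
  unfolding vnorm_def by (simp add: sum_nonneg)

lemma abs_le_vnorm: "a < d \<Longrightarrow> \<bar>x a\<bar> \<le> vnorm d x"
proof -
  assume a: "a < d"
  have "(x a)\<^sup>2 \<le> (\<Sum>b<d. (x b)\<^sup>2)" using a by (intro member_le_sum) auto
  then have "sqrt ((x a)\<^sup>2) \<le> vnorm d x" unfolding vnorm_def by (rule real_sqrt_le_mono)
  then show ?thesis by simp
qed

lemma vnorm_cong: "(\<And>a. a < d \<Longrightarrow> x a = y a) \<Longrightarrow> vnorm d x = vnorm d y"
  unfolding vnorm_def by simp

definition l1norm :: "nat \<Rightarrow> (nat \<Rightarrow> real) \<Rightarrow> real" where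
  "l1norm d x = (\<Sum>a<d. \<bar>x a\<bar>)"

lemma l1norm_nonneg: "0 \<le> l1norm d x"
  unfolding l1norm_def by (simp add: sum_nonneg)

lemma abs_le_l1norm: "a < d \<Longrightarrow> \<bar>x a\<bar> \<le> l1norm d x"
  unfolding l1norm_def by (intro member_le_sum) auto

lemma inner_le_l1norm_mult: "(\<Sum>a<d. x a * y a) \<le> l1norm d x * l1norm d y"
proof -
  have "(\<Sum>a<d. x a * y a) \<le> (\<Sum>a<d. \<bar>x a\<bar> * l1norm d y)"
  proof (rule sum_mono)
    fix a assume "a \<in> {..<d}"
    then have "\<bar>y a\<bar> \<le> l1norm d y" by (simp add: abs_le_l1norm)
    then show "x a * y a \<le> \<bar>x a\<bar> * l1norm d y"
      by (metis abs_ge_self abs_mult abs_ge_zero mult_left_mono order_trans)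
  qed
  also have "\<dots> = l1norm d x * l1norm d y" unfolding l1norm_def by (simp add: sum_distrib_right)
  finally show ?thesis .
qed

lemma l1norm_diff_le: "l1norm d (\<lambda>a. x a - y a) \<le> l1norm d x + l1norm d y"
  unfolding l1norm_def by (simp add: sum.distrib[symmetric] sum_mono abs_triangle_ineq4)

lemma abs_l1norm_diff_le: "\<bar>l1norm d x - l1norm d y\<bar> \<le> l1norm d (\<lambda>a. x a - y a)"
proof -
  have "\<bar>\<bar>x a\<bar> - \<bar>y a\<bar>\<bar> \<le> \<bar>x a - y a\<bar>" for a by (rule abs_triangle_ineq3)
  then have "\<bar>\<Sum>a<d. \<bar>x a\<bar> - \<bar>y a\<bar>\<bar> \<le> (\<Sum>a<d. \<bar>x a - y a\<bar>)"
    by (intro order_trans[OF sum_abs] sum_mono)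
  then show ?thesis unfolding l1norm_def by (simp add: sum_subtractf)
qed

lemma vnorm_le_l1norm: "vnorm d x \<le> l1norm d x"
  using L2_set_le_sum_abs[of x "{..<d}"] unfolding vnorm_def l1norm_def L2_set_def .

lemma power2_l1norm_le: "(l1norm d x)\<^sup>2 \<le> real d * (\<Sum>a<d. (x a)\<^sup>2)"
  using Cauchy_Schwarz_ineq_sum[of "\<lambda>a. \<bar>x a\<bar>" "\<lambda>_. 1" "{..<d}"]
  unfolding l1norm_def by (simp add: mult.commute)

lemma l1norm_le_sqrt_vnorm: "l1norm d x \<le> sqrt (real d) * vnorm d x"
proof -
  have "sqrt ((l1norm d x)\<^sup>2) \<le> sqrt (real d * (vnorm d x)\<^sup>2)"
    using power2_l1norm_le[of d x] unfolding power2_vnorm by (rule real_sqrt_le_mono)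
  then show ?thesis using l1norm_nonneg[of d x] vnorm_nonneg[of d x] by (simp add: real_sqrt_mult)
qed

lemma integral_powr_ge_of_lipschitz:
  fixes g :: "real \<Rightarrow> real"
  assumes lip: "M-lipschitz_on {0..1} g" and g0: "\<And>v. v \<in> {0..1} \<Longrightarrow> 0 \<le> g v"
    and c: "c \<in> {0..1}" "y \<le> g c" and y: "0 < y"
    and l: "0 < l" "l \<le> 1/2" "M * l \<le> y/2" and \<alpha>: "0 < \<alpha>"
  shows "l * (y/2) powr \<alpha> \<le> integral {0..1} (\<lambda>v. g v powr \<alpha>)"
proof -
  have g_powr_int: "(\<lambda>v. g v powr \<alpha>) integrable_on {0..1}"
    using lipschitz_on_continuous_on[OF lip] g0 \<alpha>
    by (intro integrable_continuous_interval continuous_on_powr') auto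
  \<comment> \<open>an interval of length l inside [0,1] containing c, on which g stays above y/2\<close>
  define x0 where "x0 = (if c \<ge> 1/2 then c - l else c)"
  have I: "{x0..x0 + l} \<subseteq> {0..1}" using c l unfolding x0_def by auto
  have "(y/2) powr \<alpha> \<le> g v powr \<alpha>" if v: "v \<in> {x0..x0 + l}" for v
  proof -
    have "\<bar>c - v\<bar> \<le> l" using v unfolding x0_def by (auto split: if_splits)
    then have "M * \<bar>c - v\<bar> \<le> M * l" using lipschitz_on_nonneg[OF lip] by (rule mult_left_mono)
    moreover have "g c - g v \<le> M * \<bar>c - v\<bar>"
      using lipschitz_onD[OF lip c(1), of v] I v by (auto simp: dist_real_def)
    ultimately have "g c - g v \<le> M * l" by linarith
    then show ?thesis using c(2) l(3) y \<alpha> by (intro powr_mono2) auto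
  qed
  then have "integral {x0..x0 + l} (\<lambda>_. (y/2) powr \<alpha>) \<le> integral {x0..x0 + l} (\<lambda>v. g v powr \<alpha>)"
    by (intro integral_le integrable_on_subinterval[OF g_powr_int I]) auto
  then have "l * (y/2) powr \<alpha> \<le> integral {x0..x0 + l} (\<lambda>v. g v powr \<alpha>)" using l(1) by simp
  also have "\<dots> \<le> integral {0..1} (\<lambda>v. g v powr \<alpha>)"
    by (rule integral_subset_le[OF I integrable_on_subinterval[OF g_powr_int I] g_powr_int]) simp
  finally show ?thesis .
qed

section \<open>Propagation along a coercive chain of blocks\<close>

definition initial_l1norm :: "nat \<Rightarrow> nat \<Rightarrow> (real \<Rightarrow> nat \<Rightarrow> nat \<Rightarrow> real) \<Rightarrow> real" where
  "initial_l1norm n d Z = (\<Sum>k<n. l1norm d (Z 0 k))"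

text \<open>\<open>Z v k\<close> is block \<open>k\<close> of a path \<open>v \<mapsto> Z v\<close> in \<open>\<real>^(n d)\<close>.  Sub-diagonal coercivity is the form in
  which [H-3] enters for \<open>Z v = M_h R^*_{s,s-vh} p\<close>: block \<open>j + 1\<close> drives the increment of block \<open>j\<close>,
  up to errors from the lower blocks and of second order.\<close>

definition subdiagonal_coercive ::
  "nat \<Rightarrow> nat \<Rightarrow> real \<Rightarrow> real \<Rightarrow> real \<Rightarrow> (real \<Rightarrow> nat \<Rightarrow> nat \<Rightarrow> real) \<Rightarrow> bool" where
  "subdiagonal_coercive n d al au K Z \<longleftrightarrow> (\<forall>c v j. 0 \<le> c \<longrightarrow> c \<le> v \<longrightarrow> v \<le> 1 \<longrightarrow> j + 1 < n \<longrightarrow>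
     al * (v - c) * (l1norm d (Z c (j+1)))\<^sup>2
       \<le> (\<Sum>a<d. Z c (j+1) a * (Z v j a - Z c j a))
         + l1norm d (Z c (j+1)) * (au * (v - c) * (\<Sum>k\<le>j. l1norm d (Z c k))
                                    + K * (v - c)\<^sup>2 * initial_l1norm n d Z))"

definition first_block_lipschitz :: "nat \<Rightarrow> nat \<Rightarrow> real \<Rightarrow> (real \<Rightarrow> nat \<Rightarrow> nat \<Rightarrow> real) \<Rightarrow> bool" where
  "first_block_lipschitz n d L Z \<longleftrightarrow> (\<forall>c\<in>{0..1}. \<forall>v\<in>{0..1}.
     l1norm d (\<lambda>a. Z v 0 a - Z c 0 a) \<le> L * \<bar>v - c\<bar> * initial_l1norm n d Z)"

lemma initial_l1norm_nonneg: "0 \<le> initial_l1norm n d Z"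
  unfolding initial_l1norm_def by (simp add: sum_nonneg l1norm_nonneg)

lemma first_block_lipschitz_component:
  assumes "first_block_lipschitz n d L Z" "0 \<le> L" "b < d"
  shows "(L * initial_l1norm n d Z)-lipschitz_on {0..1} (\<lambda>v. Z v 0 b)"
proof (rule lipschitz_onI)
  fix x y :: real assume "x \<in> {0..1}" "y \<in> {0..1}"
  then show "dist (Z x 0 b) (Z y 0 b) \<le> L * initial_l1norm n d Z * dist x y"
    using assms abs_le_l1norm[OF assms(3), of "\<lambda>a. Z x 0 a - Z y 0 a"]
    unfolding first_block_lipschitz_def dist_real_def by (fastforce simp: mult_ac)
qed (use assms initial_l1norm_nonneg in simp)

lemma first_block_lipschitz_l1norm:
  assumes "first_block_lipschitz n d L Z" "0 \<le> L"
  shows "(L * initial_l1norm n d Z)-lipschitz_on {0..1} (\<lambda>v. l1norm d (Z v 0))"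
proof (rule lipschitz_onI)
  fix x y :: real assume "x \<in> {0..1}" "y \<in> {0..1}"
  then show "dist (l1norm d (Z x 0)) (l1norm d (Z y 0)) \<le> L * initial_l1norm n d Z * dist x y"
    using assms abs_l1norm_diff_le[of d "Z x 0" "Z y 0"]
    unfolding first_block_lipschitz_def dist_real_def by (fastforce simp: mult_ac)
qed (use assms initial_l1norm_nonneg in simp)

lemma next_block_small:
  assumes Z: "subdiagonal_coercive n d al au K Z"
    and al: "0 < al" and au: "0 \<le> au" and K: "0 \<le> K" and dl: "0 < dl" "dl \<le> 1 / real n"
    and e: "0 \<le> e" and j: "j + 1 < n"
    and small: "\<And>v k. v \<in> {0..1 - real j / real n} \<Longrightarrow> k \<le> j \<Longrightarrow>
                   l1norm d (Z v k) \<le> e * initial_l1norm n d Z"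
    and v: "v \<in> {0..1 - real (j + 1) / real n}"
  shows "l1norm d (Z v (j+1)) \<le> (2*e/(al*dl) + au*real n*e/al + K*dl/al) * initial_l1norm n d Z"
proof -
  define Q where "Q = initial_l1norm n d Z"
  define x where "x = l1norm d (Z v (j+1))"
  have Q0: "0 \<le> Q" and x0: "0 \<le> x"
    unfolding Q_def x_def by (rule initial_l1norm_nonneg, rule l1norm_nonneg)
  have split: "real (j + 1) / real n = real j / real n + 1 / real n" by (simp add: add_divide_distrib)
  have j0: "0 \<le> real j / real n" by simp
  have v0: "0 \<le> v" and v1: "v \<le> 1 - real j / real n - 1 / real n" using v split by auto
  have "0 \<le> 1 / real n" by simp
  then have vj: "v \<in> {0..1 - real j / real n}" and vdl: "v + dl \<in> {0..1 - real j / real n}"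
    and vdl1: "v + dl \<le> 1"
    using v0 v1 dl j0 by (simp_all, linarith+)
  \<comment> \<open>compare the path at v and v + dl: the increment of block j is small, hence so is block j + 1\<close>
  have coer: "al * dl * x\<^sup>2 \<le> (\<Sum>a<d. Z v (j+1) a * (Z (v+dl) j a - Z v j a))
      + x * (au * dl * (\<Sum>k\<le>j. l1norm d (Z v k)) + K * dl\<^sup>2 * Q)"
    using Z[unfolded subdiagonal_coercive_def, rule_format, of v "v + dl" j] vj vdl1 dl(1) j
    unfolding x_def Q_def by auto
  have "(\<Sum>a<d. Z v (j+1) a * (Z (v+dl) j a - Z v j a)) \<le> x * l1norm d (\<lambda>a. Z (v+dl) j a - Z v j a)"
    unfolding x_def by (rule inner_le_l1norm_mult)
  also have "\<dots> \<le> x * (l1norm d (Z (v+dl) j) + l1norm d (Z v j))"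
    by (rule mult_left_mono[OF l1norm_diff_le x0])
  also have "\<dots> \<le> x * (2*e*Q)"
    using x0 small[OF vdl, of j] small[OF vj, of j] unfolding Q_def by (intro mult_left_mono) auto
  finally have increment: "(\<Sum>a<d. Z v (j+1) a * (Z (v+dl) j a - Z v j a)) \<le> x * (2*e*Q)" .
  have "(\<Sum>k\<le>j. l1norm d (Z v k)) \<le> (\<Sum>k\<le>j. e * Q)"
    using small[OF vj] unfolding Q_def by (intro sum_mono) auto
  also have "\<dots> \<le> real n * (e * Q)" using j e Q0 by (simp add: mult_right_mono)
  finally have lower: "x * (au * dl * (\<Sum>k\<le>j. l1norm d (Z v k)) + K * dl\<^sup>2 * Q)
      \<le> x * (au * dl * (real n * (e * Q)) + K * dl\<^sup>2 * Q)"
    using x0 au dl(1) by (intro mult_left_mono add_right_mono) auto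
  have "al * dl * x\<^sup>2 \<le> x * (2*e*Q + au*dl*real n*e*Q + K*dl\<^sup>2*Q)"
    using coer increment lower by (simp add: algebra_simps)
  then have "al * dl * x \<le> 2*e*Q + au*dl*real n*e*Q + K*dl\<^sup>2*Q" if "0 < x"
    using that by (simp add: power2_eq_square)
  then have "x * (al * dl) \<le> 2*e*Q + au*dl*real n*e*Q + K*dl\<^sup>2*Q"
    using x0 e Q0 au K dl(1) by (cases "x = 0") (simp_all add: mult_ac)
  then have "x \<le> (2*e*Q + au*dl*real n*e*Q + K*dl\<^sup>2*Q) / (al * dl)"
    using al dl by (simp add: pos_le_divide_eq)
  also have "\<dots> = (2*e/(al*dl) + au*real n*e/al + K*dl/al) * Q"
    using al dl by (simp add: field_simps power2_eq_square)
  finally show ?thesis unfolding x_def Q_def .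
qed

lemma propagation_parameters:
  fixes al au K eps :: real
  assumes al: "0 < al" and au: "0 \<le> au" and K: "0 \<le> K" and n: "1 \<le> n" and eps: "0 < eps"
  obtains dl e where "0 < dl" "dl \<le> 1 / real n" "0 < e" "e \<le> eps"
    "2*e/(al*dl) + au*real n*e/al + K*dl/al \<le> eps"
proof -
  define dl where "dl = min (1 / real n) (al*eps/(3*K + 3))"
  define e where "e = min eps (min (al*dl*eps/6) (al*eps/(3*(au + 1)*real n)))"
  have dl0: "0 < dl" unfolding dl_def using al K n eps by simp
  have "K * dl \<le> K * (al*eps/(3*K + 3))" unfolding dl_def using K by (intro mult_left_mono) auto
  also have "\<dots> \<le> al*eps/3" using al eps K by (simp add: field_simps)
  finally have t3: "K*dl/al \<le> eps/3" using al by (simp add: divide_simps mult.commute)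
  have e0: "0 < e" unfolding e_def using al au n eps dl0 by simp
  have "e \<le> al*dl*eps/6" unfolding e_def by linarith
  then have t1: "2*e/(al*dl) \<le> eps/3" using al dl0 by (simp add: divide_simps mult.commute)
  have "e \<le> al*eps/(3*(au + 1)*real n)" unfolding e_def by linarith
  then have "(au + 1)*real n*e \<le> al*eps/3" using au n by (simp add: le_divide_eq mult_ac)
  moreover have "au*real n*e \<le> (au + 1)*real n*e" using e0 by (simp add: mult_right_mono)
  ultimately have t2: "au*real n*e/al \<le> eps/3" using al by (simp add: divide_simps mult.commute)
  have "dl \<le> 1 / real n" "e \<le> eps" unfolding dl_def e_def by auto
  moreover have "2*e/(al*dl) + au*real n*e/al + K*dl/al \<le> eps" using t1 t2 t3 by linarith
  ultimately show ?thesis using that dl0 e0 by blast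
qed

lemma small_first_block_propagates:
  assumes al: "0 < al" and au: "0 \<le> au" and K: "0 \<le> K" and n: "1 \<le> n"
  shows "j < n \<Longrightarrow> 0 < eps \<Longrightarrow> \<exists>\<eta>>0. \<forall>Z. subdiagonal_coercive n d al au K Z \<longrightarrow>
     (\<forall>v\<in>{0..1}. l1norm d (Z v 0) \<le> \<eta> * initial_l1norm n d Z) \<longrightarrow>
     (\<forall>v\<in>{0..1 - real j / real n}. \<forall>k\<le>j. l1norm d (Z v k) \<le> eps * initial_l1norm n d Z)"
proof (induction j arbitrary: eps)
  case 0
  then show ?case by auto
next
  case (Suc j)
  obtain dl e where dl: "0 < dl" "dl \<le> 1 / real n" and e: "0 < e" "e \<le> eps"
    and dle: "2*e/(al*dl) + au*real n*e/al + K*dl/al \<le> eps"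
    using propagation_parameters[OF al au K n Suc.prems(2)] .
  obtain \<eta> where \<eta>: "0 < \<eta>" and IH: "\<forall>Z. subdiagonal_coercive n d al au K Z \<longrightarrow>
     (\<forall>v\<in>{0..1}. l1norm d (Z v 0) \<le> \<eta> * initial_l1norm n d Z) \<longrightarrow>
     (\<forall>v\<in>{0..1 - real j / real n}. \<forall>k\<le>j. l1norm d (Z v k) \<le> e * initial_l1norm n d Z)"
    using Suc.IH[OF _ e(1)] Suc.prems(1) by auto
  show ?case
  proof (intro exI[of _ \<eta>] conjI allI impI ballI)
    show "0 < \<eta>" by (fact \<eta>)
  next
    fix Z v k
    assume Z: "subdiagonal_coercive n d al au K Z"
      and first: "\<forall>v\<in>{0..1}. l1norm d (Z v 0) \<le> \<eta> * initial_l1norm n d Z"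
      and v: "v \<in> {0..1 - real (Suc j) / real n}" and k: "k \<le> Suc j"
    have small: "\<And>v k. v \<in> {0..1 - real j / real n} \<Longrightarrow> k \<le> j \<Longrightarrow>
        l1norm d (Z v k) \<le> e * initial_l1norm n d Z"
      using IH Z first by blast
    have Q0: "0 \<le> initial_l1norm n d Z" by (rule initial_l1norm_nonneg)
    show "l1norm d (Z v k) \<le> eps * initial_l1norm n d Z"
    proof (cases "k \<le> j")
      case True
      have "real j / real n \<le> real (Suc j) / real n" by (simp add: divide_right_mono)
      then have "v \<in> {0..1 - real j / real n}" using v by auto
      then show ?thesis
        using small[of v k] True e(2) Q0 by (meson mult_right_mono order_trans)
    next
      case False
      then have "k = j + 1" using k by simp
      then have "l1norm d (Z v k) \<le> (2*e/(al*dl) + au*real n*e/al + K*dl/al) * initial_l1norm n d Z"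
        using next_block_small[OF Z al au K dl e(1)[THEN less_imp_le] _ small] Suc.prems(1) v
        by simp
      also have "\<dots> \<le> eps * initial_l1norm n d Z" using dle Q0 by (rule mult_right_mono)
      finally show ?thesis .
    qed
  qed
qed

lemma first_block_somewhere_large:
  assumes al: "0 < al" and au: "0 \<le> au" and K: "0 \<le> K" and n: "1 \<le> n"
  obtains \<eta> where "0 < \<eta>"
    "\<And>Z. subdiagonal_coercive n d al au K Z \<Longrightarrow> 0 < initial_l1norm n d Z \<Longrightarrow>
       \<exists>c\<in>{0..1}. \<eta> * initial_l1norm n d Z < l1norm d (Z c 0)"
proof -
  have "\<exists>\<eta>>0. \<forall>Z. subdiagonal_coercive n d al au K Z \<longrightarrow>
     (\<forall>v\<in>{0..1}. l1norm d (Z v 0) \<le> \<eta> * initial_l1norm n d Z) \<longrightarrow>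
     (\<forall>v\<in>{0..1 - real (n - 1) / real n}. \<forall>k\<le>n - 1.
        l1norm d (Z v k) \<le> 1 / (2 * real n) * initial_l1norm n d Z)"
    by (rule small_first_block_propagates[OF al au K n]) (use n in simp_all)
  then obtain \<eta> where \<eta>: "0 < \<eta>" and H: "\<forall>Z. subdiagonal_coercive n d al au K Z \<longrightarrow>
     (\<forall>v\<in>{0..1}. l1norm d (Z v 0) \<le> \<eta> * initial_l1norm n d Z) \<longrightarrow>
     (\<forall>v\<in>{0..1 - real (n - 1) / real n}. \<forall>k\<le>n - 1.
        l1norm d (Z v k) \<le> 1 / (2 * real n) * initial_l1norm n d Z)"
    by blast
  have zero: "0 \<in> {0..1 - real (n - 1) / real n}" using n by (simp add: divide_simps)
  show ?thesis
  proof (rule that[OF \<eta>], rule ccontr)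
    fix Z assume Z: "subdiagonal_coercive n d al au K Z" and Q: "0 < initial_l1norm n d Z"
      and "\<not> (\<exists>c\<in>{0..1}. \<eta> * initial_l1norm n d Z < l1norm d (Z c 0))"
    then have "\<forall>v\<in>{0..1}. l1norm d (Z v 0) \<le> \<eta> * initial_l1norm n d Z" by (auto simp: not_less)
    \<comment> \<open>then every block is small at v = 0, which contradicts the definition of the initial norm\<close>
    then have small: "\<And>k. k < n \<Longrightarrow> l1norm d (Z 0 k) \<le> 1 / (2 * real n) * initial_l1norm n d Z"
      using H Z zero by auto
    have "initial_l1norm n d Z = (\<Sum>k<n. l1norm d (Z 0 k))" unfolding initial_l1norm_def ..
    also have "\<dots> \<le> (\<Sum>k<n. 1 / (2 * real n) * initial_l1norm n d Z)"
      by (rule sum_mono) (use small in auto)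
    also have "\<dots> = initial_l1norm n d Z / 2" using n by simp
    finally show False using Q by simp
  qed
qed

lemma coercive_chain_integral_lower_bound:
  assumes al: "0 < al" and au: "0 \<le> au" and K: "0 \<le> K" and L: "0 \<le> L" and n: "1 \<le> n"
    and \<alpha>: "0 < \<alpha>"
  obtains C where "0 < C"
    "\<And>Z. subdiagonal_coercive n d al au K Z \<Longrightarrow> first_block_lipschitz n d L Z \<Longrightarrow>
       C * initial_l1norm n d Z powr \<alpha> \<le> integral {0..1} (\<lambda>v. l1norm d (Z v 0) powr \<alpha>)"
proof -
  obtain \<eta> where \<eta>: "0 < \<eta>" and large: "\<And>Z. subdiagonal_coercive n d al au K Z \<Longrightarrow>
      0 < initial_l1norm n d Z \<Longrightarrow> \<exists>c\<in>{0..1}. \<eta> * initial_l1norm n d Z < l1norm d (Z c 0)"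
    using first_block_somewhere_large[OF al au K n] by blast
  define l where "l = min (1/2) (\<eta> / (2*L + 2))"
  have l0: "0 < l" using \<eta> L unfolding l_def by simp
  have "l \<le> 1/2" unfolding l_def by (fact min.cobounded1)
  note l = l0 this
  have "L * l \<le> L * (\<eta> / (2*L + 2))" unfolding l_def using L by (intro mult_left_mono) auto
  also have "\<dots> \<le> \<eta> / 2" using \<eta> L by (simp add: field_simps)
  finally have Ll: "L * l \<le> \<eta> / 2" .
  show ?thesis
  proof (rule that[of "l * (\<eta>/2) powr \<alpha>"])
    show "0 < l * (\<eta>/2) powr \<alpha>" using l \<eta> by simp
    fix Z assume Z: "subdiagonal_coercive n d al au K Z" and lip: "first_block_lipschitz n d L Z"
    define Q where "Q = initial_l1norm n d Z"
    define g where "g = (\<lambda>v. l1norm d (Z v 0))"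
    have g_lip: "(L * Q)-lipschitz_on {0..1} g"
      unfolding Q_def g_def by (rule first_block_lipschitz_l1norm[OF lip L])
    have "l * (\<eta>/2) powr \<alpha> * Q powr \<alpha> \<le> integral {0..1} (\<lambda>v. g v powr \<alpha>)"
    proof (cases "0 < Q")
      case True
      then obtain c where c: "c \<in> {0..1}" "\<eta> * Q \<le> g c"
        using large[OF Z] unfolding Q_def g_def by (auto intro: less_imp_le)
      have "L * Q * l \<le> \<eta> * Q / 2" using Ll True by (simp add: mult.commute mult.left_commute)
      then have "l * (\<eta> * Q / 2) powr \<alpha> \<le> integral {0..1} (\<lambda>v. g v powr \<alpha>)"
        using integral_powr_ge_of_lipschitz[OF g_lip _ c _ l] True \<eta> \<alpha>
        by (simp add: g_def l1norm_nonneg)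
      moreover have "(\<eta> * Q / 2) powr \<alpha> = (\<eta>/2) powr \<alpha> * Q powr \<alpha>"
        using True \<eta> powr_mult[of "\<eta>/2" Q \<alpha>] by (simp add: mult_ac)
      ultimately show ?thesis by (simp add: mult_ac)
    next
      case False
      then have "Q = 0" using initial_l1norm_nonneg[of n d Z] unfolding Q_def by simp
      moreover have "0 \<le> integral {0..1} (\<lambda>v. g v powr \<alpha>)"
        using lipschitz_on_continuous_on[OF g_lip] \<alpha> l1norm_nonneg
        by (intro integral_nonneg integrable_continuous_interval continuous_on_powr')
          (auto simp: g_def)
      ultimately show ?thesis using \<alpha> by simp
    qed
    then show "l * (\<eta>/2) powr \<alpha> * initial_l1norm n d Z powr \<alpha>
        \<le> integral {0..1} (\<lambda>v. l1norm d (Z v 0) powr \<alpha>)"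
      unfolding Q_def g_def .
  qed
qed

section \<open>Resolvents of bounded linear integral equations\<close>

locale resolvent_system =
  fixes N :: nat and A :: "real \<Rightarrow> nat \<Rightarrow> nat \<Rightarrow> real" and R :: "real \<Rightarrow> real \<Rightarrow> nat \<Rightarrow> nat \<Rightarrow> real"
    and au :: real
  assumes abs_coeff_le: "\<And>r k m. 0 \<le> r \<Longrightarrow> k < N \<Longrightarrow> m < N \<Longrightarrow> \<bar>A r k m\<bar> \<le> au"
    and au_nonneg: "0 \<le> au"
    and coeff_measurable: "\<And>k m. (\<lambda>r. A r k m) \<in> borel_measurable borel"
    and resolvent: "is_resolvent N A R"
begin

lemma coeff_mult_integrable:
  assumes a: "0 \<le> a" and km: "k < N" "m < N" and x: "continuous_on {a..b} x"
  shows "(\<lambda>r. A r k m * x r) integrable_on {a..b}"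
proof -
  obtain B where B: "\<forall>y\<in>x ` {a..b}. \<bar>y\<bar> \<le> B"
    using compact_continuous_image[OF x compact_Icc] compact_imp_bounded bounded_real by metis
  show ?thesis
  proof (rule measurable_bounded_by_integrable_imp_integrable_real[where g="\<lambda>_. au * B"])
    have "(\<lambda>r. A r k m) \<in> borel_measurable (lebesgue_on {a..b})"
      using coeff_measurable by (simp add: measurable_completion measurable_restrict_space1)
    then show "(\<lambda>r. A r k m * x r) \<in> borel_measurable (lebesgue_on {a..b})"
      by (intro borel_measurable_times continuous_imp_measurable_on_sets_lebesgue[OF x]) simp_all
    fix r assume r: "r \<in> {a..b}"
    then have "\<bar>A r k m\<bar> \<le> au" "\<bar>x r\<bar> \<le> B" using abs_coeff_le[of r k m] B a km by auto
    then show "\<bar>A r k m * x r\<bar> \<le> au * B" by (simp add: abs_mult mult_mono au_nonneg)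
  qed auto
qed

lemma coeff_sum_integrable:
  assumes "0 \<le> a" "k < N" and x: "\<And>i. i < N \<Longrightarrow> continuous_on {a..b} (\<lambda>r. x r i)"
  shows "(\<lambda>r. \<Sum>i<N. A r k i * x r i) integrable_on {a..b}"
  using coeff_mult_integrable[OF assms(1,2) _ x] by (intro integrable_sum) auto

lemma resolvent_integral_eq:
  "0 \<le> u \<Longrightarrow> u \<le> \<sigma> \<Longrightarrow> k < N \<Longrightarrow> l < N \<Longrightarrow>
   R \<sigma> u k l = (if k = l then 1 else 0) + integral {u..\<sigma>} (\<lambda>r. \<Sum>m<N. A r k m * R r u m l)"
  using resolvent unfolding is_resolvent_def by blast

lemma resolvent_continuous:
  "0 \<le> u \<Longrightarrow> k < N \<Longrightarrow> l < N \<Longrightarrow> u \<le> a \<Longrightarrow> continuous_on {a..b} (\<lambda>\<sigma>. R \<sigma> u k l)"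
  using resolvent continuous_on_subset[of "{u..}" _ "{a..b}"] unfolding is_resolvent_def by force

lemma resolvent_diag: "0 \<le> u \<Longrightarrow> k < N \<Longrightarrow> l < N \<Longrightarrow> R u u k l = (if k = l then 1 else 0)"
  using resolvent_integral_eq[of u u k l] by simp

lemma tmulv_resolvent_diag:
  assumes "0 \<le> s" "b < N"
  shows "tmulv N (R s s) p b = p b"
  unfolding tmulv_def using resolvent_diag[OF assms(1) _ assms(2)] assms(2)
  by (simp flip: of_bool_def)

lemma integral_equation_zero_solution:
  assumes w: "0 \<le> w"
    and X_cont: "\<And>i b. i < N \<Longrightarrow> continuous_on {w..b} (\<lambda>r. X r i)"
    and X_eq: "\<And>\<sigma> k. w \<le> \<sigma> \<Longrightarrow> k < N \<Longrightarrow> X \<sigma> k = integral {w..\<sigma>} (\<lambda>r. \<Sum>i<N. A r k i * X r i)"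
    and s: "w \<le> s" and k: "k < N"
  shows "X s k = 0"
proof -
  define \<phi> where "\<phi> = (\<lambda>r. \<Sum>i<N. \<bar>X r i\<bar>)"
  have \<phi>_cont: "continuous_on {w..s} \<phi>" unfolding \<phi>_def by (intro continuous_intros X_cont) auto
  have "\<phi> s \<le> 0 * exp ((real N * au) * (s - w))"
  proof (rule gronwall_inequality[OF \<phi>_cont])
    show "0 \<le> real N * au" using au_nonneg by simp
    show "s \<in> {w..s}" using s by simp
    fix \<sigma> assume \<sigma>: "\<sigma> \<in> {w..s}"
    have \<phi>_int: "\<phi> integrable_on {w..\<sigma>}"
      using \<sigma> by (intro integrable_continuous_interval continuous_on_subset[OF \<phi>_cont]) auto
    have "\<bar>X \<sigma> k\<bar> \<le> au * integral {w..\<sigma>} \<phi>" if k: "k < N" for k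
    proof -
      have "\<bar>X \<sigma> k\<bar> = norm (integral {w..\<sigma>} (\<lambda>r. \<Sum>i<N. A r k i * X r i))"
        using X_eq[of \<sigma> k] \<sigma> k by simp
      also have "\<dots> \<le> integral {w..\<sigma>} (\<lambda>r. au * \<phi> r)"
      proof (rule integral_norm_bound_integral)
        show "(\<lambda>r. \<Sum>i<N. A r k i * X r i) integrable_on {w..\<sigma>}"
          by (rule coeff_sum_integrable[OF w k X_cont])
        show "(\<lambda>r. au * \<phi> r) integrable_on {w..\<sigma>}" by (rule integrable_on_mult_right[OF \<phi>_int])
        fix r assume r: "r \<in> {w..\<sigma>}"
        have "norm (\<Sum>i<N. A r k i * X r i) \<le> (\<Sum>i<N. \<bar>A r k i\<bar> * \<bar>X r i\<bar>)"
          using sum_abs[of "\<lambda>i. A r k i * X r i" "{..<N}"] by (simp add: abs_mult)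
        also have "\<dots> \<le> (\<Sum>i<N. au * \<bar>X r i\<bar>)"
          using abs_coeff_le r w k by (intro sum_mono mult_right_mono) auto
        finally show "norm (\<Sum>i<N. A r k i * X r i) \<le> au * \<phi> r"
          unfolding \<phi>_def by (simp add: sum_distrib_left)
      qed
      finally show ?thesis by simp
    qed
    then have "\<phi> \<sigma> \<le> (\<Sum>i<N. au * integral {w..\<sigma>} \<phi>)" unfolding \<phi>_def by (intro sum_mono) auto
    then show "\<phi> \<sigma> \<le> 0 + real N * au * integral {w..\<sigma>} \<phi>" by simp
  qed
  moreover have "\<bar>X s k\<bar> \<le> \<phi> s" unfolding \<phi>_def using k by (intro member_le_sum) auto
  ultimately show ?thesis by simp
qed

lemma integral_solution_unique:
  assumes w: "0 \<le> w"
    and x_cont: "\<And>i. i < N \<Longrightarrow> continuous_on {w..} (\<lambda>r. x r i)"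
    and y_cont: "\<And>i. i < N \<Longrightarrow> continuous_on {w..} (\<lambda>r. y r i)"
    and x_eq: "\<And>\<sigma> k. w \<le> \<sigma> \<Longrightarrow> k < N \<Longrightarrow>
                x \<sigma> k = x w k + integral {w..\<sigma>} (\<lambda>r. \<Sum>i<N. A r k i * x r i)"
    and y_eq: "\<And>\<sigma> k. w \<le> \<sigma> \<Longrightarrow> k < N \<Longrightarrow>
                y \<sigma> k = y w k + integral {w..\<sigma>} (\<lambda>r. \<Sum>i<N. A r k i * y r i)"
    and init: "\<And>k. k < N \<Longrightarrow> x w k = y w k"
    and s: "w \<le> s" and k: "k < N"
  shows "x s k = y s k"
proof -
  have "x s k - y s k = 0"
  proof (rule integral_equation_zero_solution[OF w _ _ s k])
    show "continuous_on {w..b} (\<lambda>r. x r i - y r i)" if "i < N" for i b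
      using x_cont[OF that] y_cont[OF that]
      by (intro continuous_intros) (auto intro: continuous_on_subset)
    fix \<sigma> k assume that: "w \<le> \<sigma>" "k < N"
    have "(\<lambda>r. \<Sum>i<N. A r k i * x r i) integrable_on {w..\<sigma>}"
      "(\<lambda>r. \<Sum>i<N. A r k i * y r i) integrable_on {w..\<sigma>}"
      using that continuous_on_subset[OF x_cont] continuous_on_subset[OF y_cont]
      by (auto intro!: coeff_sum_integrable[OF w that(2)])
    then show "x \<sigma> k - y \<sigma> k = integral {w..\<sigma>} (\<lambda>r. \<Sum>i<N. A r k i * (x r i - y r i))"
      using x_eq[OF that] y_eq[OF that] init[OF that(2)]
      by (simp add: integral_diff[symmetric] sum_subtractf right_diff_distrib)
  qed
  then show ?thesis by simp
qed

lemma resolvent_integral_eq_from: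
  assumes "0 \<le> u" "u \<le> w" "w \<le> \<sigma>" "k < N" "l < N"
  shows "R \<sigma> u k l = R w u k l + integral {w..\<sigma>} (\<lambda>r. \<Sum>i<N. A r k i * R r u i l)"
proof -
  have "(\<lambda>r. \<Sum>m<N. A r k m * R r u m l) integrable_on {u..\<sigma>}"
    using assms by (intro coeff_sum_integrable resolvent_continuous) auto
  from Henstock_Kurzweil_Integration.integral_combine[OF assms(2,3) this]
  show ?thesis
    using assms resolvent_integral_eq[of u \<sigma> k l] resolvent_integral_eq[of u w k l] by simp
qed

lemma resolvent_mulv_integral_eq:
  assumes w: "0 \<le> w" "w \<le> \<sigma>" and k: "k < N"
  shows "(\<Sum>m<N. R \<sigma> w k m * c m) = c k +
           integral {w..\<sigma>} (\<lambda>r. \<Sum>i<N. A r k i * (\<Sum>m<N. R r w i m * c m))"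
proof -
  define G where "G = (\<lambda>m r. \<Sum>i<N. A r k i * R r w i m)"
  have G_int: "G m integrable_on {w..\<sigma>}" if "m < N" for m
    unfolding G_def using w k that by (intro coeff_sum_integrable resolvent_continuous) auto
  have "(\<Sum>m<N. R \<sigma> w k m * c m) = (\<Sum>m<N. ((if k = m then 1 else 0) + integral {w..\<sigma>} (G m)) * c m)"
    using resolvent_integral_eq[OF w k] unfolding G_def by (intro sum.cong) auto
  also have "\<dots> = c k + (\<Sum>m<N. integral {w..\<sigma>} (G m) * c m)"
    using k by (simp add: distrib_right sum.distrib flip: of_bool_def)
  also have "(\<Sum>m<N. integral {w..\<sigma>} (G m) * c m) = integral {w..\<sigma>} (\<lambda>r. \<Sum>m<N. G m r * c m)"
    using G_int by (subst integral_sum) (auto intro: integrable_on_mult_left)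
  also have "(\<lambda>r. \<Sum>m<N. G m r * c m) = (\<lambda>r. \<Sum>i<N. A r k i * (\<Sum>m<N. R r w i m * c m))"
    unfolding G_def by (auto simp: sum_distrib_left sum_distrib_right mult.assoc intro: sum.swap)
  finally show ?thesis .
qed

lemma resolvent_compose:
  assumes u: "0 \<le> u" "u \<le> w" and s: "w \<le> \<sigma>" and k: "k < N" and l: "l < N"
  shows "R \<sigma> u k l = (\<Sum>m<N. R \<sigma> w k m * R w u m l)"
proof (rule integral_solution_unique[where x="\<lambda>r i. R r u i l" and w=w and y="\<lambda>r i. \<Sum>m<N. R r w i m * R w u m l"])
  show w: "0 \<le> w" using u by simp
  show "continuous_on {w..} (\<lambda>r. R r u i l)" if "i < N" for i
    using resolvent that l u unfolding is_resolvent_def by (auto intro: continuous_on_subset)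
  show "continuous_on {w..} (\<lambda>r. \<Sum>m<N. R r w i m * R w u m l)" if "i < N" for i
    using resolvent that w unfolding is_resolvent_def by (intro continuous_intros) auto
  show "R \<sigma>' u k l = R w u k l + integral {w..\<sigma>'} (\<lambda>r. \<Sum>i<N. A r k i * R r u i l)"
    if "w \<le> \<sigma>'" "k < N" for \<sigma>' k
    using resolvent_integral_eq_from u that l by blast
  have diag: "(\<Sum>m<N. R w w k m * R w u m l) = R w u k l" if "k < N" for k
    using resolvent_diag[OF w that] that by (simp flip: of_bool_def)
  show "(\<Sum>m<N. R \<sigma>' w k m * R w u m l) = (\<Sum>m<N. R w w k m * R w u m l)
      + integral {w..\<sigma>'} (\<lambda>r. \<Sum>i<N. A r k i * (\<Sum>m<N. R r w i m * R w u m l))"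
    if "w \<le> \<sigma>'" "k < N" for \<sigma>' k
    using resolvent_mulv_integral_eq[OF w that] diag[OF that(2)] by simp
  show "R w u k l = (\<Sum>m<N. R w w k m * R w u m l)" if "k < N" for k
    using diag[OF that] by simp
qed (use s k in auto)

end

section \<open>Conjugation by the scaling matrix\<close>

locale banded_resolvent_system = resolvent_system +
  fixes d :: nat
  assumes coeff_band: "\<And>r i m. 0 \<le> r \<Longrightarrow> i < N \<Longrightarrow> m < N \<Longrightarrow> m div d + 1 < i div d \<Longrightarrow> A r i m = 0"
begin

text \<open>Since \<open>A\<close> vanishes below its sub-diagonal
  blocks, the conjugated coefficients are \<open>O(1/h)\<close>, so Gronwall bounds over a time interval of
  length \<open>h\<close> hold uniformly in \<open>h\<close>.\<close>

definition scaled_coeff :: "real \<Rightarrow> real \<Rightarrow> nat \<Rightarrow> nat \<Rightarrow> real" where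
  "scaled_coeff h r i m = A r i m * (h ^ (m div d) / h ^ (i div d))"

definition scaled_resolvent :: "real \<Rightarrow> real \<Rightarrow> real \<Rightarrow> nat \<Rightarrow> nat \<Rightarrow> real" where
  "scaled_resolvent h \<sigma> u i l = R \<sigma> u i l * (h ^ (l div d) / h ^ (i div d))"

lemma abs_scaled_coeff_le:
  assumes h: "0 < h" "h \<le> 1" and r: "0 \<le> r" and im: "i < N" "m < N"
  shows "\<bar>scaled_coeff h r i m\<bar> \<le> au / h"
proof (cases "m div d + 1 < i div d")
  case True
  then show ?thesis unfolding scaled_coeff_def using coeff_band[OF r im] au_nonneg h by simp
next
  case False
  then have "h ^ (m div d) / h ^ (i div d) \<le> 1 / h" using power_ratio_le[OF h, of "i div d" "m div d" 1] by simp
  then have "\<bar>A r i m\<bar> * (h ^ (m div d) / h ^ (i div d)) \<le> au * (1 / h)"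
    using abs_coeff_le[OF r im] au_nonneg h by (intro mult_mono) auto
  then show ?thesis unfolding scaled_coeff_def using h by (simp add: abs_mult)
qed

lemma abs_scaled_coeff_le_upper:
  assumes h: "0 < h" "h \<le> 1" and r: "0 \<le> r" and im: "i < N" "m < N" and le: "i div d \<le> m div d"
  shows "\<bar>scaled_coeff h r i m\<bar> \<le> au"
proof -
  have "h ^ (m div d) / h ^ (i div d) \<le> 1" using power_ratio_le[OF h, of "i div d" "m div d" 0] le by simp
  then have "\<bar>A r i m\<bar> * (h ^ (m div d) / h ^ (i div d)) \<le> au * 1"
    using abs_coeff_le[OF r im] au_nonneg h by (intro mult_mono) auto
  then show ?thesis unfolding scaled_coeff_def using h by (simp add: abs_mult)
qed

lemma abs_scaled_coeff_sum_le:
  assumes h: "0 < h" "h \<le> 1" and r: "0 \<le> r" and i: "i < N"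
  shows "\<bar>\<Sum>m<N. scaled_coeff h r i m * x m\<bar> \<le> au / h * (\<Sum>m<N. \<bar>x m\<bar>)"
proof -
  have "\<bar>\<Sum>m<N. scaled_coeff h r i m * x m\<bar> \<le> (\<Sum>m<N. \<bar>scaled_coeff h r i m\<bar> * \<bar>x m\<bar>)"
    using sum_abs[of "\<lambda>m. scaled_coeff h r i m * x m" "{..<N}"] by (simp add: abs_mult)
  also have "\<dots> \<le> (\<Sum>m<N. au / h * \<bar>x m\<bar>)"
    using abs_scaled_coeff_le[OF h r i] by (intro sum_mono mult_right_mono) auto
  finally show ?thesis by (simp add: sum_distrib_left)
qed

lemma scaled_coeff_integrable:
  "0 \<le> u \<Longrightarrow> m < N \<Longrightarrow> l < N \<Longrightarrow> (\<lambda>r. scaled_coeff h r m l) integrable_on {u..w}"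
  unfolding scaled_coeff_def
  using coeff_mult_integrable[of u m l w "\<lambda>_. 1"] by (intro integrable_on_mult_left) simp

lemma scaled_coeff_sum_integrable:
  assumes "0 \<le> a" "i < N" and x: "\<And>m. m < N \<Longrightarrow> continuous_on {a..b} (\<lambda>r. x r m)"
  shows "(\<lambda>r. \<Sum>m<N. scaled_coeff h r i m * x r m) integrable_on {a..b}"
proof -
  have "(\<lambda>r. \<Sum>m<N. A r i m * (h ^ (m div d) / h ^ (i div d) * x r m)) integrable_on {a..b}"
    by (intro coeff_sum_integrable[OF assms(1,2)] continuous_on_mult_left x)
  then show ?thesis unfolding scaled_coeff_def by (simp only: mult.assoc)
qed

lemma scaled_resolvent_continuous:
  "0 \<le> u \<Longrightarrow> i < N \<Longrightarrow> l < N \<Longrightarrow> u \<le> a \<Longrightarrow> continuous_on {a..b} (\<lambda>r. scaled_resolvent h r u i l)"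
  unfolding scaled_resolvent_def by (intro continuous_intros resolvent_continuous)

lemma scaled_resolvent_integral_eq:
  assumes h: "0 < h" and u: "0 \<le> u" "u \<le> \<sigma>" and i: "i < N" and l: "l < N"
  shows "scaled_resolvent h \<sigma> u i l
    = (if i = l then 1 else 0) + integral {u..\<sigma>} (\<lambda>r. \<Sum>m<N. scaled_coeff h r i m * scaled_resolvent h r u m l)"
proof -
  define c where "c = h ^ (l div d) / h ^ (i div d)"
  have "scaled_resolvent h \<sigma> u i l
      = (if i = l then 1 else 0) * c + integral {u..\<sigma>} (\<lambda>r. (\<Sum>m<N. A r i m * R r u m l) * c)"
    unfolding scaled_resolvent_def c_def[symmetric] resolvent_integral_eq[OF u i l]
    by (simp only: distrib_right integral_mult_left)
  also have "(if i = l then 1 else 0) * c = (if i = l then 1 else 0)" using h unfolding c_def by simp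
  also have "(\<lambda>r. (\<Sum>m<N. A r i m * R r u m l) * c)
      = (\<lambda>r. \<Sum>m<N. scaled_coeff h r i m * scaled_resolvent h r u m l)"
    unfolding scaled_coeff_def scaled_resolvent_def c_def sum_distrib_right
    using h by (intro ext sum.cong) (auto simp: field_simps)
  finally show ?thesis .
qed

lemma scaled_resolvent_column_l1_le:
  assumes h: "0 < h" "h \<le> 1" and u: "0 \<le> u" and \<sigma>: "u \<le> \<sigma>" "\<sigma> \<le> u + h" and l: "l < N"
  shows "(\<Sum>i<N. \<bar>scaled_resolvent h \<sigma> u i l\<bar>) \<le> exp (real N * au)"
proof -
  define \<phi> where "\<phi> = (\<lambda>r. \<Sum>i<N. \<bar>scaled_resolvent h r u i l\<bar>)"
  have \<phi>_cont: "continuous_on {u..u + h} \<phi>" unfolding \<phi>_def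
    by (intro continuous_intros scaled_resolvent_continuous[OF u _ l]) auto
  have K: "0 \<le> real N * au / h" using au_nonneg h by simp
  have "\<phi> \<sigma> \<le> 1 * exp ((real N * au / h) * (\<sigma> - u))"
  proof (rule gronwall_inequality[OF \<phi>_cont K])
    show "\<sigma> \<in> {u..u + h}" using \<sigma> by simp
    fix \<sigma>' assume \<sigma>': "\<sigma>' \<in> {u..u + h}"
    have \<phi>_int: "\<phi> integrable_on {u..\<sigma>'}"
      using \<sigma>' by (intro integrable_continuous_interval continuous_on_subset[OF \<phi>_cont]) auto
    have "\<bar>scaled_resolvent h \<sigma>' u i l\<bar> \<le> (if i = l then 1 else 0) + au / h * integral {u..\<sigma>'} \<phi>"
      if i: "i < N" for i
    proof -
      have "norm (integral {u..\<sigma>'} (\<lambda>r. \<Sum>m<N. scaled_coeff h r i m * scaled_resolvent h r u m l))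
          \<le> integral {u..\<sigma>'} (\<lambda>r. au / h * \<phi> r)"
        using abs_scaled_coeff_sum_le[OF h _ i] u \<sigma>'
        by (intro integral_norm_bound_integral scaled_coeff_sum_integrable[OF u i]
            scaled_resolvent_continuous[OF u _ l] integrable_on_mult_right[OF \<phi>_int])
          (auto simp: \<phi>_def)
      then show ?thesis
        using scaled_resolvent_integral_eq[OF h(1) u, of \<sigma>' i l] \<sigma>' i l by auto
    qed
    then have "\<phi> \<sigma>' \<le> (\<Sum>i<N. (if i = l then 1 else 0) + au / h * integral {u..\<sigma>'} \<phi>)"
      unfolding \<phi>_def by (intro sum_mono) auto
    then show "\<phi> \<sigma>' \<le> 1 + real N * au / h * integral {u..\<sigma>'} \<phi>"
      using l by (simp add: sum.distrib)
  qed
  also have "\<dots> \<le> exp (real N * au)"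
  proof -
    have "(\<sigma> - u) / h \<le> 1" using \<sigma> h by (simp add: divide_simps)
    then have "real N * au * ((\<sigma> - u) / h) \<le> real N * au"
      using au_nonneg by (intro mult_left_le) auto
    then show ?thesis by (simp add: mult.assoc)
  qed
  finally show ?thesis unfolding \<phi>_def .
qed

lemma scaled_resolvent_near_identity:
  assumes h: "0 < h" "h \<le> 1" and u: "0 \<le> u" and \<sigma>: "u \<le> \<sigma>" "\<sigma> \<le> u + h" and i: "i < N" and l: "l < N"
  shows "\<bar>scaled_resolvent h \<sigma> u i l - (if i = l then 1 else 0)\<bar> \<le> au * exp (real N * au) * ((\<sigma> - u) / h)"
proof -
  have "\<bar>scaled_resolvent h \<sigma> u i l - (if i = l then 1 else 0)\<bar>
      = norm (integral {u..\<sigma>} (\<lambda>r. \<Sum>m<N. scaled_coeff h r i m * scaled_resolvent h r u m l))"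
    using scaled_resolvent_integral_eq[OF h(1) u \<sigma>(1) i l] by simp
  also have "\<dots> \<le> integral {u..\<sigma>} (\<lambda>r. au / h * exp (real N * au))"
  proof (rule integral_norm_bound_integral)
    show "(\<lambda>r. \<Sum>m<N. scaled_coeff h r i m * scaled_resolvent h r u m l) integrable_on {u..\<sigma>}"
      by (intro scaled_coeff_sum_integrable[OF u i] scaled_resolvent_continuous[OF u _ l]) auto
    fix r assume r: "r \<in> {u..\<sigma>}"
    have "norm (\<Sum>m<N. scaled_coeff h r i m * scaled_resolvent h r u m l)
        \<le> au / h * (\<Sum>m<N. \<bar>scaled_resolvent h r u m l\<bar>)"
      using abs_scaled_coeff_sum_le[OF h _ i] r u by simp
    also have "\<dots> \<le> au / h * exp (real N * au)"
      using scaled_resolvent_column_l1_le[OF h u _ _ l, of r] r \<sigma> au_nonneg h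
      by (intro mult_left_mono) auto
    finally show "norm (\<Sum>m<N. scaled_coeff h r i m * scaled_resolvent h r u m l)
        \<le> au / h * exp (real N * au)" .
  qed auto
  also have "\<dots> = au * exp (real N * au) * ((\<sigma> - u) / h)" using \<sigma> by simp
  finally show ?thesis .
qed

end

section \<open>The scaled adjoint flow\<close>

locale scaled_adjoint_flow = banded_resolvent_system +
  fixes n :: nat and t s :: real and p :: "nat \<Rightarrow> real" and al :: real
  assumes N_eq: "N = n * d" and d_pos: "1 \<le> d" and n_pos: "1 \<le> n"
    and al_pos: "0 < al" and t_nonneg: "0 \<le> t" and t_less: "t < s" and short: "s - t \<le> 1"
    and coeff_subdiagonal_coercive: "\<And>r j \<xi>. 0 \<le> r \<Longrightarrow> j + 1 < n \<Longrightarrow>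
        al * (\<Sum>a<d. (\<xi> a)\<^sup>2) \<le> (\<Sum>a<d. \<Sum>b<d. A r ((j+1)*d + a) (j*d + b) * \<xi> b * \<xi> a)"
begin

definition h :: real where "h = s - t"

text \<open>\<open>Z u = M_h R^*_{s,u} p\<close>: its first block at \<open>u = s - v h\<close> is the integrand of the theorem,
  and \<open>Z s = M_h p\<close>.\<close>

definition Z :: "real \<Rightarrow> nat \<Rightarrow> real" where
  "Z u l = h ^ (l div d) * (\<Sum>k<N. R s u k l * p k)"

definition Zv :: "real \<Rightarrow> nat \<Rightarrow> nat \<Rightarrow> real" where
  "Zv v j a = Z (s - v * h) (j*d + a)"

definition Q :: real where "Q = l1norm N (scaleM d h p)"

definition B :: real where "B = exp (real N * au)"

lemma h_pos: "0 < h" "h \<le> 1"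
  unfolding h_def using t_less short by auto

lemma B_pos: "0 < B"
  unfolding B_def by simp

lemma block_index_lt_N: "k < n \<Longrightarrow> a < d \<Longrightarrow> k*d + a < N"
  using block_index_less N_eq by simp

lemma sum_N_blocks: "(\<Sum>m<N. f m) = (\<Sum>k<n. \<Sum>a<d. f (k*d + a))"
  using sum_nat_blocks[of f n d] N_eq by simp

lemma path_time_bounds:
  assumes "0 \<le> c" "c \<le> v" "v \<le> 1"
  shows "t \<le> s - v * h" "s - v * h \<le> s - c * h" "s - c * h \<le> s"
    "(s - c * h) - (s - v * h) = (v - c) * h" "s - c * h \<le> (s - v * h) + h"
proof -
  have "v * h \<le> 1 * h" "c * h \<le> v * h" "(v - c) * h \<le> 1 * h" "0 \<le> c * h"
    using assms h_pos by (intro mult_right_mono mult_nonneg_nonneg; simp)+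
  then show "t \<le> s - v * h" "s - v * h \<le> s - c * h" "s - c * h \<le> s"
    "(s - c * h) - (s - v * h) = (v - c) * h" "s - c * h \<le> (s - v * h) + h"
    using assms h_pos unfolding h_def by (auto simp: algebra_simps)
qed

lemma Z_transfer:
  assumes "t \<le> u" "u \<le> w" "w \<le> s" and l: "l < N"
  shows "Z u l = (\<Sum>m<N. Z w m * scaled_resolvent h w u m l)"
proof -
  have "Z u l = h ^ (l div d) * (\<Sum>k<N. (\<Sum>m<N. R s w k m * R w u m l) * p k)"
    unfolding Z_def using resolvent_compose[of u w s _ l] assms t_nonneg by simp
  also have "\<dots> = (\<Sum>m<N. \<Sum>k<N. R s w k m * R w u m l * p k * h ^ (l div d))"
    by (subst sum.swap) (simp add: sum_distrib_left sum_distrib_right mult_ac)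
  also have "\<dots> = (\<Sum>m<N. Z w m * scaled_resolvent h w u m l)"
  proof (rule sum.cong[OF refl])
    fix m
    have "Z w m * scaled_resolvent h w u m l = (\<Sum>k<N. R s w k m * p k) * (R w u m l * h ^ (l div d))"
      unfolding Z_def scaled_resolvent_def using h_pos by simp
    moreover have "(\<Sum>k<N. R s w k m * R w u m l * p k * h ^ (l div d))
        = (\<Sum>k<N. R s w k m * p k) * (R w u m l * h ^ (l div d))"
      unfolding sum_distrib_right by (simp add: mult_ac)
    ultimately show "(\<Sum>k<N. R s w k m * R w u m l * p k * h ^ (l div d)) = Z w m * scaled_resolvent h w u m l"
      by simp
  qed
  finally show ?thesis .
qed

lemma Z_at_s: "l < N \<Longrightarrow> Z s l = scaleM d h p l"
  unfolding Z_def scaleM_def using resolvent_diag[of s _ l] t_nonneg t_less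
  by (simp add: mult.commute flip: of_bool_def)

lemma abs_Z_le:
  assumes w: "t \<le> w" "w \<le> s" and l: "l < N"
  shows "\<bar>Z w l\<bar> \<le> B * Q"
proof -
  have "\<bar>scaled_resolvent h s w m l\<bar> \<le> B" if "m < N" for m
  proof -
    have "\<bar>scaled_resolvent h s w m l\<bar> \<le> (\<Sum>i<N. \<bar>scaled_resolvent h s w i l\<bar>)"
      using that by (intro member_le_sum) auto
    also have "\<dots> \<le> B" unfolding B_def
      using w t_nonneg h_pos by (intro scaled_resolvent_column_l1_le l) (auto simp: h_def)
    finally show ?thesis .
  qed
  then have "\<bar>\<Sum>m<N. scaleM d h p m * scaled_resolvent h s w m l\<bar> \<le> (\<Sum>m<N. \<bar>scaleM d h p m\<bar> * B)"
    by (intro order_trans[OF sum_abs] sum_mono) (auto simp: abs_mult intro: mult_left_mono)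
  then show ?thesis
    using Z_transfer[OF w order_refl l] Z_at_s
    unfolding Q_def l1norm_def by (simp add: sum_distrib_left mult.commute)
qed

lemma Z_l1_le: "t \<le> w \<Longrightarrow> w \<le> s \<Longrightarrow> (\<Sum>m<N. \<bar>Z w m\<bar>) \<le> real N * B * Q"
  using sum_mono[of "{..<N}" "\<lambda>m. \<bar>Z w m\<bar>" "\<lambda>_. B * Q"] abs_Z_le by auto

lemma Z_increment:
  assumes "t \<le> u" "u \<le> w" "w \<le> s" and l: "l < N"
  shows "Z u l - Z w l = (\<Sum>m<N. Z w m * (scaled_resolvent h w u m l - (if m = l then 1 else 0)))"
proof -
  have "(\<Sum>m<N. Z w m * (if m = l then 1 else 0)) = Z w l" using l by (simp flip: of_bool_def)
  then show ?thesis using Z_transfer[OF assms] by (simp add: right_diff_distrib sum_subtractf)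
qed

lemma first_block_increment_le:
  assumes cv: "0 \<le> c" "c \<le> v" "v \<le> 1"
  shows "l1norm d (\<lambda>a. Zv v 0 a - Zv c 0 a) \<le> (real d * real N * B * au * B) * (v - c) * Q"
proof -
  define u where "u = s - v * h"
  define w where "w = s - c * h"
  have uw: "t \<le> u" "u \<le> w" "w \<le> s" and wu: "w - u = (v - c) * h" and wuh: "w \<le> u + h"
    using path_time_bounds[OF cv] unfolding u_def w_def by auto
  have u0: "0 \<le> u" using uw t_nonneg by simp
  have "\<bar>Zv v 0 a - Zv c 0 a\<bar> \<le> real N * B * Q * (au * B * (v - c))" if a: "a < d" for a
  proof -
    have aN: "a < N" using block_index_lt_N[of 0 a] n_pos a by simp
    have near: "\<bar>scaled_resolvent h w u m a - (if m = a then 1 else 0)\<bar> \<le> au * B * (v - c)"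
      if "m < N" for m
      using scaled_resolvent_near_identity[OF h_pos u0 uw(2) wuh that aN] wu h_pos
      unfolding B_def by simp
    have "Zv v 0 a - Zv c 0 a
        = (\<Sum>m<N. Z w m * (scaled_resolvent h w u m a - (if m = a then 1 else 0)))"
      using Z_increment[OF uw aN] unfolding Zv_def u_def w_def by simp
    then have "\<bar>Zv v 0 a - Zv c 0 a\<bar>
        \<le> (\<Sum>m<N. \<bar>Z w m * (scaled_resolvent h w u m a - (if m = a then 1 else 0))\<bar>)"
      by (simp only: sum_abs)
    also have "\<dots> \<le> (\<Sum>m<N. \<bar>Z w m\<bar> * (au * B * (v - c)))"
      unfolding abs_mult by (intro sum_mono mult_left_mono near) auto
    also have "\<dots> \<le> real N * B * Q * (au * B * (v - c))"
      unfolding sum_distrib_right[symmetric]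
      using Z_l1_le[OF _ uw(3)] uw au_nonneg B_pos cv by (intro mult_right_mono) auto
    finally show ?thesis .
  qed
  then have "l1norm d (\<lambda>a. Zv v 0 a - Zv c 0 a) \<le> (\<Sum>a<d. real N * B * Q * (au * B * (v - c)))"
    unfolding l1norm_def by (intro sum_mono) auto
  then show ?thesis by (simp add: mult_ac)
qed

lemma initial_l1norm_Zv: "initial_l1norm n d Zv = Q"
proof -
  have "initial_l1norm n d Zv = (\<Sum>k<n. \<Sum>a<d. \<bar>scaleM d h p (k*d + a)\<bar>)"
    unfolding initial_l1norm_def l1norm_def Zv_def using Z_at_s block_index_lt_N by simp
  also have "\<dots> = Q"
    unfolding Q_def l1norm_def using sum_nat_blocks[of "\<lambda>m. \<bar>scaleM d h p m\<bar>" n d] N_eq by simp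
  finally show ?thesis .
qed

lemma first_block_lipschitz_Zv: "first_block_lipschitz n d (real d * real N * B * au * B) Zv"
  unfolding first_block_lipschitz_def initial_l1norm_Zv
proof (intro ballI)
  fix c v :: real assume "c \<in> {0..1}" "v \<in> {0..1}"
  then consider "c \<le> v" "0 \<le> c" "v \<le> 1" | "v \<le> c" "0 \<le> v" "c \<le> 1" by fastforce
  then show "l1norm d (\<lambda>a. Zv v 0 a - Zv c 0 a) \<le> real d * real N * B * au * B * \<bar>v - c\<bar> * Q"
  proof cases
    case 2
    have "l1norm d (\<lambda>a. Zv v 0 a - Zv c 0 a) = l1norm d (\<lambda>a. Zv c 0 a - Zv v 0 a)"
      unfolding l1norm_def by (simp add: abs_minus_commute)
    then show ?thesis using first_block_increment_le[OF 2(2,1,3)] 2 by simp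
  qed (use first_block_increment_le in simp)
qed

definition coeff_integral :: "real \<Rightarrow> real \<Rightarrow> nat \<Rightarrow> nat \<Rightarrow> real" where
  "coeff_integral u w m l = integral {u..w} (\<lambda>r. scaled_coeff h r m l)"

definition second_order :: "real \<Rightarrow> real \<Rightarrow> nat \<Rightarrow> nat \<Rightarrow> real" where
  "second_order u w m l = integral {u..w}
     (\<lambda>r. \<Sum>i<N. scaled_coeff h r m i * (scaled_resolvent h r u i l - (if i = l then 1 else 0)))"

lemma scaled_resolvent_expansion:
  assumes u: "t \<le> u" "u \<le> w" and m: "m < N" and l: "l < N"
  shows "scaled_resolvent h w u m l - (if m = l then 1 else 0) = coeff_integral u w m l + second_order u w m l"
proof -
  have u0: "0 \<le> u" using u t_nonneg by simp
  have split: "(\<Sum>i<N. scaled_coeff h r m i * scaled_resolvent h r u i l) = scaled_coeff h r m l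
      + (\<Sum>i<N. scaled_coeff h r m i * (scaled_resolvent h r u i l - (if i = l then 1 else 0)))" for r
  proof -
    have "(\<Sum>i<N. scaled_coeff h r m i * (if i = l then 1 else 0)) = scaled_coeff h r m l"
      using l by (simp flip: of_bool_def)
    then show ?thesis by (simp add: right_diff_distrib sum_subtractf)
  qed
  have "(\<lambda>r. \<Sum>i<N. scaled_coeff h r m i * (scaled_resolvent h r u i l - (if i = l then 1 else 0)))
      integrable_on {u..w}"
    by (intro scaled_coeff_sum_integrable[OF u0 m] continuous_intros scaled_resolvent_continuous[OF u0 _ l]) auto
  then show ?thesis
    using scaled_resolvent_integral_eq[OF h_pos(1) u0 u(2) m l] scaled_coeff_integrable[OF u0 m l]
    unfolding coeff_integral_def second_order_def split by (simp add: integral_add)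
qed

lemma abs_second_order_le:
  assumes u: "t \<le> u" "u \<le> w" "w \<le> u + h" and m: "m < N" and l: "l < N"
  shows "\<bar>second_order u w m l\<bar> \<le> real N * au\<^sup>2 * B * ((w - u) / h)\<^sup>2"
proof -
  have u0: "0 \<le> u" using u t_nonneg by simp
  have "\<bar>second_order u w m l\<bar> \<le> integral {u..w} (\<lambda>r. au / h * (real N * (au * B * ((w - u) / h))))"
    unfolding second_order_def real_norm_def[symmetric]
  proof (rule integral_norm_bound_integral)
    show "(\<lambda>r. \<Sum>i<N. scaled_coeff h r m i * (scaled_resolvent h r u i l - (if i = l then 1 else 0)))
        integrable_on {u..w}"
      by (intro scaled_coeff_sum_integrable[OF u0 m] continuous_intros scaled_resolvent_continuous[OF u0 _ l]) auto
    fix r assume r: "r \<in> {u..w}"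
    have near: "\<bar>scaled_resolvent h r u i l - (if i = l then 1 else 0)\<bar> \<le> au * B * ((w - u) / h)"
      if "i < N" for i
    proof -
      have "\<bar>scaled_resolvent h r u i l - (if i = l then 1 else 0)\<bar> \<le> au * B * ((r - u) / h)"
        using scaled_resolvent_near_identity[OF h_pos u0 _ _ that l, of r] r u unfolding B_def by auto
      also have "\<dots> \<le> au * B * ((w - u) / h)"
        using r h_pos au_nonneg B_pos by (intro mult_left_mono divide_right_mono) auto
      finally show ?thesis .
    qed
    have "norm (\<Sum>i<N. scaled_coeff h r m i * (scaled_resolvent h r u i l - (if i = l then 1 else 0)))
        \<le> au / h * (\<Sum>i<N. \<bar>scaled_resolvent h r u i l - (if i = l then 1 else 0)\<bar>)"
      using abs_scaled_coeff_sum_le[OF h_pos _ m] r u0 by simp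
    also have "\<dots> \<le> au / h * (real N * (au * B * ((w - u) / h)))"
      using sum_mono[of "{..<N}", OF near] au_nonneg h_pos by (intro mult_left_mono) auto
    finally show "norm (\<Sum>i<N. scaled_coeff h r m i * (scaled_resolvent h r u i l - (if i = l then 1 else 0)))
        \<le> au / h * (real N * (au * B * ((w - u) / h)))" .
  qed auto
  also have "\<dots> = real N * au\<^sup>2 * B * ((w - u) / h)\<^sup>2"
    using u h_pos by (simp add: power2_eq_square field_simps)
  finally show ?thesis .
qed

lemma Z_increment_expansion:
  assumes "t \<le> u" "u \<le> w" "w \<le> s" and l: "l < N"
  shows "Z u l - Z w l = (\<Sum>m<N. Z w m * coeff_integral u w m l) + (\<Sum>m<N. Z w m * second_order u w m l)"
  using Z_increment[OF assms] scaled_resolvent_expansion[OF assms(1,2) _ l]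
  by (simp add: distrib_left sum.distrib)

lemma coeff_integral_below_band:
  assumes u: "t \<le> u" and k: "j + 1 < k" "k < n" and a: "a < d" and b: "b < d"
  shows "coeff_integral u w (k*d + b) (j*d + a) = 0"
proof -
  have "scaled_coeff h r (k*d + b) (j*d + a) = 0" if "r \<in> {u..w}" for r
    using that u t_nonneg k a b block_index_lt_N[of k b] block_index_lt_N[of j a]
    by (auto simp: scaled_coeff_def intro!: coeff_band)
  then have "coeff_integral u w (k*d + b) (j*d + a) = integral {u..w} (\<lambda>_. 0)"
    unfolding coeff_integral_def by (rule integral_cong)
  then show ?thesis by simp
qed

lemma abs_coeff_integral_le:
  assumes u: "t \<le> u" "u \<le> w" and k: "k \<le> j" "j < n" and a: "a < d" and b: "b < d"
  shows "\<bar>coeff_integral u w (k*d + b) (j*d + a)\<bar> \<le> au * (w - u)"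
proof -
  have u0: "0 \<le> u" using u t_nonneg by simp
  have N: "k*d + b < N" "j*d + a < N" using block_index_lt_N k a b by auto
  have "norm (coeff_integral u w (k*d + b) (j*d + a)) \<le> integral {u..w} (\<lambda>r. au)"
    unfolding coeff_integral_def
    using abs_scaled_coeff_le_upper[OF h_pos _ N] u0 k a b
    by (intro integral_norm_bound_integral scaled_coeff_integrable[OF u0 N]) auto
  then show ?thesis using u by (simp add: mult.commute)
qed

lemma subdiagonal_form_ge:
  assumes u: "t \<le> u" "u \<le> w" and j: "j + 1 < n"
  shows "((w - u) / h) * al * (\<Sum>a<d. (\<xi> a)\<^sup>2)
    \<le> (\<Sum>a<d. \<Sum>b<d. \<xi> a * \<xi> b * coeff_integral u w ((j+1)*d + b) (j*d + a))"
proof -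
  have u0: "0 \<le> u" using u t_nonneg by simp
  have int: "(\<lambda>r. \<xi> a * \<xi> b * scaled_coeff h r ((j+1)*d + b) (j*d + a)) integrable_on {u..w}"
    if "a < d" "b < d" for a b
    using that j block_index_lt_N[of "j + 1" b] block_index_lt_N[of j a]
    by (intro integrable_on_mult_right scaled_coeff_integrable[OF u0]) auto
  \<comment> \<open>the conjugation turns the sub-diagonal block of A into A/h exactly\<close>
  have sub: "scaled_coeff h r ((j+1)*d + b) (j*d + a) = A r ((j+1)*d + b) (j*d + a) / h"
    if "a < d" "b < d" for r a b
  proof -
    have block_div: "(k*d + c) div d = k" if "c < d" for k c using that by simp
    have "((j+1)*d + b) div d = j + 1" "(j*d + a) div d = j"
      using block_div[OF \<open>b < d\<close>] block_div[OF \<open>a < d\<close>] by blast+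
    then show ?thesis using h_pos unfolding scaled_coeff_def by simp
  qed
  have "integral {u..w} (\<lambda>r. (al / h) * (\<Sum>a<d. (\<xi> a)\<^sup>2))
      \<le> integral {u..w} (\<lambda>r. \<Sum>a<d. \<Sum>b<d. \<xi> a * \<xi> b * scaled_coeff h r ((j+1)*d + b) (j*d + a))"
  proof (rule integral_le)
    show "(\<lambda>r. \<Sum>a<d. \<Sum>b<d. \<xi> a * \<xi> b * scaled_coeff h r ((j+1)*d + b) (j*d + a)) integrable_on {u..w}"
      using int by (intro integrable_sum) auto
    fix r assume "r \<in> {u..w}"
    then have "al * (\<Sum>a<d. (\<xi> a)\<^sup>2) \<le> (\<Sum>a<d. \<Sum>b<d. A r ((j+1)*d + a) (j*d + b) * \<xi> b * \<xi> a)"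
      using u0 by (intro coeff_subdiagonal_coercive j) auto
    also have "\<dots> = (\<Sum>a<d. \<Sum>b<d. \<xi> a * \<xi> b * A r ((j+1)*d + b) (j*d + a))"
      by (subst sum.swap) (simp add: mult_ac)
    also have "\<dots> = (\<Sum>a<d. \<Sum>b<d. h * (\<xi> a * \<xi> b * scaled_coeff h r ((j+1)*d + b) (j*d + a)))"
      using h_pos sub by (intro sum.cong refl) simp
    also have "\<dots> = h * (\<Sum>a<d. \<Sum>b<d. \<xi> a * \<xi> b * scaled_coeff h r ((j+1)*d + b) (j*d + a))"
      by (simp add: sum_distrib_left)
    finally show "al / h * (\<Sum>a<d. (\<xi> a)\<^sup>2)
        \<le> (\<Sum>a<d. \<Sum>b<d. \<xi> a * \<xi> b * scaled_coeff h r ((j+1)*d + b) (j*d + a))"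
      using h_pos by (simp add: divide_simps mult.commute)
  qed auto
  also have "\<dots> = (\<Sum>a<d. integral {u..w}
      (\<lambda>r. \<Sum>b<d. \<xi> a * \<xi> b * scaled_coeff h r ((j+1)*d + b) (j*d + a)))"
    by (rule integral_sum) (use int in \<open>auto intro!: integrable_sum\<close>)
  also have "\<dots> = (\<Sum>a<d. \<Sum>b<d. integral {u..w}
      (\<lambda>r. \<xi> a * \<xi> b * scaled_coeff h r ((j+1)*d + b) (j*d + a)))"
    by (intro sum.cong refl integral_sum) (use int in \<open>auto simp del: mult_Suc\<close>)
  also have "\<dots> = (\<Sum>a<d. \<Sum>b<d. \<xi> a * \<xi> b * coeff_integral u w ((j+1)*d + b) (j*d + a))"
    unfolding coeff_integral_def by simp
  finally show ?thesis using u by (simp add: mult_ac)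
qed

definition lead_term :: "real \<Rightarrow> real \<Rightarrow> (nat \<Rightarrow> real) \<Rightarrow> nat \<Rightarrow> nat \<Rightarrow> real" where
  "lead_term u w \<xi> j k = (\<Sum>a<d. \<Sum>b<d. \<xi> a * Z w (k*d + b) * coeff_integral u w (k*d + b) (j*d + a))"

definition remainder_term :: "real \<Rightarrow> real \<Rightarrow> (nat \<Rightarrow> real) \<Rightarrow> nat \<Rightarrow> real" where
  "remainder_term u w \<xi> j = (\<Sum>a<d. \<xi> a * (\<Sum>m<N. Z w m * second_order u w m (j*d + a)))"

lemma block_increment_split:
  assumes uw: "t \<le> u" "u \<le> w" "w \<le> s" and j: "j + 1 < n"
  shows "(\<Sum>a<d. \<xi> a * (Z u (j*d + a) - Z w (j*d + a)))
    = (\<Sum>k\<le>j. lead_term u w \<xi> j k) + lead_term u w \<xi> j (j + 1) + remainder_term u w \<xi> j"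
proof -
  have "(\<Sum>a<d. \<xi> a * (Z u (j*d + a) - Z w (j*d + a)))
      = (\<Sum>a<d. \<xi> a * (\<Sum>m<N. Z w m * coeff_integral u w m (j*d + a))) + remainder_term u w \<xi> j"
    unfolding remainder_term_def
    using Z_increment_expansion[OF uw block_index_lt_N[of j]] j
    by (simp add: distrib_left sum.distrib)
  also have "(\<Sum>a<d. \<xi> a * (\<Sum>m<N. Z w m * coeff_integral u w m (j*d + a))) = (\<Sum>k<n. lead_term u w \<xi> j k)"
    unfolding lead_term_def sum_N_blocks sum_distrib_left
    by (subst sum.swap) (simp add: mult.assoc)
  also have "(\<Sum>k<n. lead_term u w \<xi> j k) = (\<Sum>k<Suc (Suc j). lead_term u w \<xi> j k)"
    using j coeff_integral_below_band[OF uw(1)]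
    by (intro sum.mono_neutral_right) (auto simp: lead_term_def)
  finally show ?thesis by (simp add: lessThan_Suc_atMost)
qed

lemma abs_lead_term_le:
  assumes uw: "t \<le> u" "u \<le> w" and k: "k \<le> j" "j < n"
  shows "\<bar>lead_term u w \<xi> j k\<bar> \<le> l1norm d \<xi> * l1norm d (\<lambda>b. Z w (k*d + b)) * au * (w - u)"
proof -
  have "\<bar>lead_term u w \<xi> j k\<bar> \<le> (\<Sum>a<d. \<Sum>b<d. \<bar>\<xi> a\<bar> * \<bar>Z w (k*d + b)\<bar> * (au * (w - u)))"
    unfolding lead_term_def
    using abs_coeff_integral_le[OF uw k]
    by (intro order_trans[OF sum_abs] sum_mono order_trans[OF sum_abs])
      (auto simp: abs_mult intro!: mult_left_mono)
  also have "\<dots> = (\<Sum>a<d. \<bar>\<xi> a\<bar>) * (\<Sum>b<d. \<bar>Z w (k*d + b)\<bar>) * (au * (w - u))"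
    unfolding sum_product by (simp add: sum_distrib_left sum_distrib_right mult_ac)
  also have "\<dots> = l1norm d \<xi> * l1norm d (\<lambda>b. Z w (k*d + b)) * au * (w - u)"
    unfolding l1norm_def by (simp add: mult_ac)
  finally show ?thesis .
qed

lemma abs_remainder_term_le:
  assumes uw: "t \<le> u" "u \<le> w" "w \<le> s" "w \<le> u + h" and j: "j < n"
  shows "\<bar>remainder_term u w \<xi> j\<bar> \<le> l1norm d \<xi> * ((real N)\<^sup>2 * au\<^sup>2 * B\<^sup>2 * ((w - u) / h)\<^sup>2 * Q)"
proof -
  define E where "E = real N * au\<^sup>2 * B * ((w - u) / h)\<^sup>2"
  have "\<bar>\<Sum>m<N. Z w m * second_order u w m (j*d + a)\<bar> \<le> (\<Sum>m<N. \<bar>Z w m\<bar>) * E" if "a < d" for a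
    unfolding sum_distrib_right E_def
    using abs_second_order_le[OF uw(1,2,4) _ block_index_lt_N[OF j that]]
    by (intro order_trans[OF sum_abs] sum_mono) (auto simp: abs_mult intro!: mult_left_mono)
  also have "\<dots> \<le> real N * B * Q * E"
    using Z_l1_le[OF _ uw(3)] uw B_pos unfolding E_def by (intro mult_right_mono) auto
  finally have "\<bar>remainder_term u w \<xi> j\<bar> \<le> (\<Sum>a<d. \<bar>\<xi> a\<bar> * (real N * B * Q * E))"
    unfolding remainder_term_def
    by (intro order_trans[OF sum_abs] sum_mono) (auto simp: abs_mult intro!: mult_left_mono)
  moreover have "real N * B * Q * E = (real N)\<^sup>2 * au\<^sup>2 * B\<^sup>2 * ((w - u) / h)\<^sup>2 * Q"
    unfolding E_def by (simp add: power2_eq_square)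
  ultimately show ?thesis unfolding l1norm_def by (simp add: sum_distrib_right)
qed

lemma subdiagonal_coercive_Zv: "subdiagonal_coercive n d (al / real d) au ((real N)\<^sup>2 * au\<^sup>2 * B\<^sup>2) Zv"
  unfolding subdiagonal_coercive_def initial_l1norm_Zv
proof (intro allI impI)
  fix c v :: real and j :: nat
  assume cv: "0 \<le> c" "c \<le> v" "v \<le> 1" and j: "j + 1 < n"
  define u where "u = s - v * h"
  define w where "w = s - c * h"
  define \<xi> where "\<xi> = Zv c (j + 1)"
  define K where "K = (real N)\<^sup>2 * au\<^sup>2 * B\<^sup>2"
  have uw: "t \<le> u" "u \<le> w" "w \<le> s" "w \<le> u + h" and wu: "w - u = (v - c) * h"
    using path_time_bounds[OF cv] unfolding u_def w_def by auto
  have vc: "(w - u) / h = v - c" using wu h_pos by simp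
  have "(v - c) * h \<le> (v - c) * 1" using cv h_pos by (intro mult_left_mono) auto
  then have wu_le: "w - u \<le> v - c" using wu by simp
  have \<xi>_eq: "\<xi> a = Z w ((j+1)*d + a)" for a unfolding \<xi>_def Zv_def w_def ..
  have Zv_c: "Zv c k = (\<lambda>b. Z w (k*d + b))" for k unfolding Zv_def w_def ..
  have lead: "(v - c) * al * (\<Sum>a<d. (\<xi> a)\<^sup>2) \<le> lead_term u w \<xi> j (j + 1)"
    using subdiagonal_form_ge[OF uw(1,2) j, of \<xi>] unfolding vc lead_term_def \<xi>_eq
    by (simp add: mult_ac)
  have "\<bar>lead_term u w \<xi> j k\<bar> \<le> l1norm d \<xi> * l1norm d (Zv c k) * au * (v - c)" if "k \<le> j" for k
  proof -
    have "\<bar>lead_term u w \<xi> j k\<bar> \<le> l1norm d \<xi> * l1norm d (Zv c k) * au * (w - u)"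
      using abs_lead_term_le[OF uw(1,2) that] j unfolding Zv_c by simp
    also have "\<dots> \<le> l1norm d \<xi> * l1norm d (Zv c k) * au * (v - c)"
      using wu_le l1norm_nonneg au_nonneg by (intro mult_left_mono) (auto simp: mult_nonneg_nonneg)
    finally show ?thesis .
  qed
  then have "- (\<Sum>k\<le>j. lead_term u w \<xi> j k) \<le> (\<Sum>k\<le>j. l1norm d \<xi> * l1norm d (Zv c k) * au * (v - c))"
    using sum_abs[of "lead_term u w \<xi> j" "{..j}"] sum_mono[of "{..j}" "\<lambda>k. \<bar>lead_term u w \<xi> j k\<bar>"]
    by (smt (verit) atMost_iff)
  also have "\<dots> = l1norm d \<xi> * (au * (v - c) * (\<Sum>k\<le>j. l1norm d (Zv c k)))"
    by (simp add: sum_distrib_left mult_ac)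
  finally have lower: "- (\<Sum>k\<le>j. lead_term u w \<xi> j k) \<le> l1norm d \<xi> * (au * (v - c) * (\<Sum>k\<le>j. l1norm d (Zv c k)))" .
  have rem: "- remainder_term u w \<xi> j \<le> l1norm d \<xi> * (K * (v - c)\<^sup>2 * Q)"
    using abs_remainder_term_le[OF uw, of j \<xi>] j unfolding vc K_def by simp
  have "al / real d * (v - c) * (l1norm d \<xi>)\<^sup>2 \<le> al / real d * (v - c) * (real d * (\<Sum>a<d. (\<xi> a)\<^sup>2))"
    using power2_l1norm_le al_pos cv by (intro mult_left_mono) auto
  also have "\<dots> = (v - c) * al * (\<Sum>a<d. (\<xi> a)\<^sup>2)" using d_pos by simp
  finally have coercive: "al / real d * (v - c) * (l1norm d \<xi>)\<^sup>2 \<le> (v - c) * al * (\<Sum>a<d. (\<xi> a)\<^sup>2)" .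
  have "(\<Sum>a<d. \<xi> a * (Zv v j a - Zv c j a))
      = (\<Sum>k\<le>j. lead_term u w \<xi> j k) + lead_term u w \<xi> j (j + 1) + remainder_term u w \<xi> j"
    using block_increment_split[OF uw(1-3) j] unfolding Zv_def u_def w_def by simp
  with lead lower rem coercive
  show "al / real d * (v - c) * (l1norm d (Zv c (j + 1)))\<^sup>2
      \<le> (\<Sum>a<d. Zv c (j + 1) a * (Zv v j a - Zv c j a))
        + l1norm d (Zv c (j + 1)) * (au * (v - c) * (\<Sum>k\<le>j. l1norm d (Zv c k))
                                     + (real N)\<^sup>2 * au\<^sup>2 * B\<^sup>2 * (v - c)\<^sup>2 * Q)"
    unfolding \<xi>_def[symmetric] K_def[symmetric] distrib_left by linarith
qed

lemma first_block_Zv: "b < d \<Longrightarrow> Zv v 0 b = tmulv N (R s (s - v * h)) p b"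
  unfolding Zv_def Z_def tmulv_def by simp

lemma adjoint_integral_ge:
  assumes \<alpha>: "0 < \<alpha>" and C: "0 \<le> C"
    and chain: "C * initial_l1norm n d Zv powr \<alpha> \<le> integral {0..1} (\<lambda>v. l1norm d (Zv v 0) powr \<alpha>)"
  shows "C * (1 / sqrt (real d)) powr \<alpha> * vnorm N (scaleM d h p) powr \<alpha>
    \<le> integral {0..1} (\<lambda>v. vnorm d (tmulv N (R s (s - v * h)) p) powr \<alpha>)"
proof -
  define c where "c = (1 / sqrt (real d)) powr \<alpha>"
  have c0: "0 < c" unfolding c_def using d_pos by simp
  have cont: "continuous_on {0..1} (\<lambda>v. Zv v 0 b)" if "b < d" for b
    using first_block_lipschitz_component[OF first_block_lipschitz_Zv _ that] B_pos au_nonneg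
    by (auto intro: lipschitz_on_continuous_on)
  have vnorm_eq: "vnorm d (tmulv N (R s (s - v * h)) p) = vnorm d (Zv v 0)" for v
    by (rule vnorm_cong) (simp add: first_block_Zv)
  have "vnorm N (scaleM d h p) powr \<alpha> \<le> Q powr \<alpha>"
    using vnorm_le_l1norm vnorm_nonneg \<alpha> unfolding Q_def by (intro powr_mono2) auto
  moreover have "0 \<le> C * c" using c0 C by simp
  ultimately have "C * c * vnorm N (scaleM d h p) powr \<alpha> \<le> C * c * Q powr \<alpha>"
    by (rule mult_left_mono)
  also have "\<dots> = c * (C * Q powr \<alpha>)" by simp
  also have "\<dots> \<le> c * integral {0..1} (\<lambda>v. l1norm d (Zv v 0) powr \<alpha>)"
    using chain c0 unfolding initial_l1norm_Zv by (intro mult_left_mono) auto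
  also have "\<dots> = integral {0..1} (\<lambda>v. c * l1norm d (Zv v 0) powr \<alpha>)" by simp
  also have "\<dots> \<le> integral {0..1} (\<lambda>v. vnorm d (Zv v 0) powr \<alpha>)"
  proof (rule integral_le)
    show "(\<lambda>v. c * l1norm d (Zv v 0) powr \<alpha>) integrable_on {0..1}"
      "(\<lambda>v. vnorm d (Zv v 0) powr \<alpha>) integrable_on {0..1}"
      unfolding l1norm_def vnorm_def using \<alpha>
      by (auto intro!: integrable_continuous_interval continuous_intros continuous_on_powr' cont
          simp: sum_nonneg)
    fix v
    have "(l1norm d (Zv v 0) / sqrt (real d)) powr \<alpha> \<le> vnorm d (Zv v 0) powr \<alpha>"
      using l1norm_le_sqrt_vnorm[of d "Zv v 0"] d_pos l1norm_nonneg \<alpha>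
      by (intro powr_mono2) (auto simp: divide_simps mult.commute)
    then show "c * l1norm d (Zv v 0) powr \<alpha> \<le> vnorm d (Zv v 0) powr \<alpha>"
      unfolding c_def using d_pos l1norm_nonneg[of d "Zv v 0"]
      by (simp add: powr_mult[symmetric] divide_inverse mult.commute)
  qed
  finally show ?thesis unfolding c_def vnorm_eq .
qed

end

section \<open>Consequences of [H-3] and of the block structure of the resolvent\<close>

lemma vnorm_scaleM_zero:
  assumes "1 \<le> n"
  shows "vnorm (n*d) (scaleM d 0 p) = vnorm d p"
proof -
  have "(\<Sum>j<n*d. (scaleM d 0 p j)\<^sup>2) = (\<Sum>k<n. \<Sum>a<d. (scaleM d 0 p (k*d + a))\<^sup>2)"
    by (rule sum_nat_blocks)
  also have "\<dots> = (\<Sum>k<n. if k = 0 then (\<Sum>a<d. (p a)\<^sup>2) else 0)"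
    by (intro sum.cong refl) (simp add: scaleM_def power_0_left)
  also have "\<dots> = (\<Sum>a<d. (p a)\<^sup>2)" using assms by simp
  finally show ?thesis unfolding vnorm_def by simp
qed

lemma H3_abs_coeff_le:
  assumes H: "H3 n d al au A" and r: "0 \<le> r" and k: "k < n*d" and m: "m < n*d"
  shows "\<bar>A r k m\<bar> \<le> au"
proof -
  have d: "0 < d" using k by (cases d) auto
  have i: "k div d < n" and j: "m div d < n" using k m by (simp_all add: less_mult_imp_div_less)
  define e where "e = (\<lambda>b::nat. if b = m mod d then 1 else (0::real))"
  have "vnorm d e = 1"
    unfolding vnorm_def e_def using d by (simp add: if_distrib[of power2] cong: if_cong)
  moreover have "mulv d (blk d (A r) (k div d) (m div d)) e (k mod d) = A r k m"
    unfolding mulv_def blk_def e_def using d by (simp add: if_distrib[of "(*) _"] cong: if_cong)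
  moreover have "vnorm d (mulv d (blk d (A r) (k div d) (m div d)) e) \<le> au * vnorm d e"
    using H r i j unfolding H3_def by blast
  ultimately show ?thesis using abs_le_vnorm[of "k mod d" d] d by (metis mod_less_divisor mult_1_right order_trans)
qed

lemma H3_coeff_band:
  assumes H: "H3 n d al au A" and r: "0 \<le> r" and i: "i < n*d" and m: "m < n*d"
    and im: "m div d + 1 < i div d"
  shows "A r i m = 0"
proof -
  have d: "0 < d" using i by (cases d) auto
  have "blk d (A r) (i div d) (m div d) (i mod d) (m mod d) = 0"
    using H r i m im d unfolding H3_def by (simp add: less_mult_imp_div_less)
  then show ?thesis unfolding blk_def by simp
qed

lemma H3_subdiagonal_coercive:
  assumes H: "H3 n d al au A" and r: "0 \<le> r" and j: "j + 1 < n"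
  shows "al * (\<Sum>a<d. (\<xi> a)\<^sup>2) \<le> (\<Sum>a<d. \<Sum>b<d. A r ((j+1)*d + a) (j*d + b) * \<xi> b * \<xi> a)"
proof -
  have "j + 1 \<in> {1..<n}" using j by simp
  then have "al * (vnorm d \<xi>)\<^sup>2 \<le> (\<Sum>a<d. \<Sum>b<d. blk d (A r) (j+1) (j+1-1) a b * \<xi> b * \<xi> a)"
    using H r unfolding H3_def by blast
  then show ?thesis unfolding blk_def power2_vnorm by simp
qed

lemma (in banded_resolvent_system) adjoint_lower_bound_off_diagonal:
  assumes N: "N = n * d" and d: "1 \<le> d" and n: "1 \<le> n" and al: "0 < al" and \<alpha>: "0 < \<alpha>"
    and coer: "\<And>r j \<xi>. 0 \<le> r \<Longrightarrow> j + 1 < n \<Longrightarrow>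
        al * (\<Sum>a<d. (\<xi> a)\<^sup>2) \<le> (\<Sum>a<d. \<Sum>b<d. A r ((j+1)*d + a) (j*d + b) * \<xi> b * \<xi> a)"
  obtains C where "0 < C"
    "\<And>t s p. 0 \<le> t \<Longrightarrow> t < s \<Longrightarrow> s \<le> t + 1 \<Longrightarrow>
       C * vnorm N (scaleM d (s - t) p) powr \<alpha>
         \<le> integral {0..1} (\<lambda>v. vnorm d (tmulv N (R s (s - v * (s - t))) p) powr \<alpha>)"
proof -
  define B where "B = exp (real N * au)"
  define K where "K = (real N)\<^sup>2 * au\<^sup>2 * B\<^sup>2"
  define L where "L = real d * real N * B * au * B"
  have "0 < al / real d" "0 \<le> K" "0 \<le> L" using al d au_nonneg by (simp_all add: K_def L_def B_def)
  then obtain C where C: "0 < C" and chain: "\<And>Z. subdiagonal_coercive n d (al / real d) au K Z \<Longrightarrow>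
      first_block_lipschitz n d L Z \<Longrightarrow>
      C * initial_l1norm n d Z powr \<alpha> \<le> integral {0..1} (\<lambda>v. l1norm d (Z v 0) powr \<alpha>)"
    using coercive_chain_integral_lower_bound[OF _ au_nonneg _ _ n \<alpha>] by metis
  show ?thesis
  proof (rule that[of "C * (1 / sqrt (real d)) powr \<alpha>"])
    show "0 < C * (1 / sqrt (real d)) powr \<alpha>" using C d by simp
    fix t s :: real and p :: "nat \<Rightarrow> real" assume ts: "0 \<le> t" "t < s" "s \<le> t + 1"
    interpret flow: scaled_adjoint_flow N A R au d n t s p al
      by unfold_locales (use N d n al ts coer in auto)
    have "flow.B = B" unfolding flow.B_def B_def ..
    then have "C * initial_l1norm n d flow.Zv powr \<alpha>
        \<le> integral {0..1} (\<lambda>v. l1norm d (flow.Zv v 0) powr \<alpha>)"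
      using flow.subdiagonal_coercive_Zv flow.first_block_lipschitz_Zv
      by (intro chain) (simp_all add: K_def L_def)
    from flow.adjoint_integral_ge[OF \<alpha> _ this] C
    show "C * (1 / sqrt (real d)) powr \<alpha> * vnorm N (scaleM d (s - t) p) powr \<alpha>
        \<le> integral {0..1} (\<lambda>v. vnorm d (tmulv N (R s (s - v * (s - t))) p) powr \<alpha>)"
      unfolding flow.h_def by simp
  qed
qed

lemma resolvent_adjoint_lower_bound:
  fixes A :: "real \<Rightarrow> nat \<Rightarrow> nat \<Rightarrow> real" and R :: "real \<Rightarrow> real \<Rightarrow> nat \<Rightarrow> nat \<Rightarrow> real"
  assumes d: "1 \<le> d" and n: "1 \<le> n" and \<alpha>: "0 < \<alpha>"
    and meas: "\<And>k l. (\<lambda>r. A r k l) \<in> borel_measurable borel"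
    and H3: "H3 n d al au A" and res: "is_resolvent (n*d) A R"
  obtains C where "0 < C"
    "\<And>t s p. 0 \<le> t \<Longrightarrow> t \<le> s \<Longrightarrow> s \<le> t + 1 \<Longrightarrow>
       C * vnorm (n*d) (scaleM d (s - t) p) powr \<alpha>
         \<le> integral {0..1} (\<lambda>v. vnorm d (tmulv (n*d) (R s (s - v * (s - t))) p) powr \<alpha>)"
proof -
  have "0 < n * d" using d n by simp
  then have au: "0 \<le> au" using H3_abs_coeff_le[OF H3 order_refl, of 0 0] by fastforce
  interpret banded_resolvent_system "n*d" A R au d
    using H3_abs_coeff_le[OF H3] H3_coeff_band[OF H3] au meas res by unfold_locales auto
  have al: "0 < al" using H3 unfolding H3_def by simp
  obtain C where C: "0 < C" and off_diag: "\<And>t s p. 0 \<le> t \<Longrightarrow> t < s \<Longrightarrow> s \<le> t + 1 \<Longrightarrow>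
      C * vnorm (n*d) (scaleM d (s - t) p) powr \<alpha>
        \<le> integral {0..1} (\<lambda>v. vnorm d (tmulv (n*d) (R s (s - v * (s - t))) p) powr \<alpha>)"
    using adjoint_lower_bound_off_diagonal[OF refl d n al \<alpha> H3_subdiagonal_coercive[OF H3]] by metis
  show ?thesis
  proof (rule that[of "min 1 C"])
    show "0 < min 1 C" using C by simp
    fix t s :: real and p :: "nat \<Rightarrow> real" assume ts: "0 \<le> t" "t \<le> s" "s \<le> t + 1"
    show "min 1 C * vnorm (n*d) (scaleM d (s - t) p) powr \<alpha>
        \<le> integral {0..1} (\<lambda>v. vnorm d (tmulv (n*d) (R s (s - v * (s - t))) p) powr \<alpha>)"
    proof (cases "s = t")
      case True
      have "b < d \<Longrightarrow> b < n * d" for b using block_index_less[of 0 n b d] n by simp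
      then have "vnorm d (tmulv (n*d) (R s (s - v * (s - t))) p) = vnorm d p" for v
        using tmulv_resolvent_diag[of s] ts True by (intro vnorm_cong) simp
      moreover have "min 1 C * vnorm d p powr \<alpha> \<le> vnorm d p powr \<alpha>"
        using C by (intro mult_left_le_one_le) auto
      ultimately show ?thesis using True vnorm_scaleM_zero[OF n] by simp
    next
      case False
      then have "min 1 C * vnorm (n*d) (scaleM d (s - t) p) powr \<alpha>
          \<le> C * vnorm (n*d) (scaleM d (s - t) p) powr \<alpha>"
        by (intro mult_right_mono) auto
      with off_diag[of t s p] ts False show ?thesis by simp
    qed
  qed
qed

lemma Rbarv_adjoint_eq:
  assumes struct: "\<And>s t k a b. 0 \<le> t \<Longrightarrow> t \<le> s \<Longrightarrow> s \<le> t + T0 \<Longrightarrow> k < n \<Longrightarrow> a < d \<Longrightarrow> b < d \<Longrightarrow>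
                     R s t (k*d + a) b = (s - t) ^ k / fact k * Rb k s t a b"
    and ts: "0 \<le> t" "t \<le> s" "s \<le> t + T0" and v: "v \<in> {0..1}" and b: "b < d"
  shows "tmulv (n*d) (Rbarv d Rb s t v) (scaleM d (s - t) p) b = tmulv (n*d) (R s (s - v * (s - t))) p b"
proof -
  define u where "u = s - v * (s - t)"
  have "v * (s - t) \<le> 1 * (s - t)" using v ts by (intro mult_right_mono) auto
  moreover have "0 \<le> v * (s - t)" using v ts by simp
  ultimately have u: "0 \<le> u" "u \<le> s" "s \<le> u + T0" and su: "s - u = v * (s - t)"
    using ts unfolding u_def by auto
  have "Rbarv d Rb s t v (k*d + a) b * scaleM d (s - t) p (k*d + a) = R s u (k*d + a) b * p (k*d + a)"
    if "k < n" "a < d" for k a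
    using struct[OF u that b] that unfolding Rbarv_def scaleM_def su u_def[symmetric]
    by (simp add: power_mult_distrib)
  then show ?thesis
    unfolding tmulv_def sum_nat_blocks u_def[symmetric] by simp
qed

theorem lemma5p3:
  fixes n d :: nat and \<alpha> al au T0 :: real
    and A :: "real \<Rightarrow> nat \<Rightarrow> nat \<Rightarrow> real"
    and R :: "real \<Rightarrow> real \<Rightarrow> nat \<Rightarrow> nat \<Rightarrow> real"
    and Rb :: "nat \<Rightarrow> real \<Rightarrow> real \<Rightarrow> nat \<Rightarrow> nat \<Rightarrow> real"
  assumes dn: "d \<ge> 1" "n \<ge> 1"
    and alpha: "0 < \<alpha>" "\<alpha> < 2"
    and meas: "\<And>k l. (\<lambda>r. A r k l) \<in> borel_measurable borel"
    and H3: "H3 n d al au A"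
    and res: "is_resolvent (n*d) A R"
    and T0: "0 < T0" "T0 \<le> 1"
    and struct: "\<And>s t k a b. 0 \<le> t \<Longrightarrow> t \<le> s \<Longrightarrow> s \<le> t + T0 \<Longrightarrow> k < n \<Longrightarrow> a < d \<Longrightarrow> b < d \<Longrightarrow>
                   R s t (k*d+a) b = (s - t) ^ k / fact k * Rb k s t a b"
    and cont: "\<And>k a b. k < n \<Longrightarrow> a < d \<Longrightarrow> b < d \<Longrightarrow>
                   continuous_on {(s,t). 0 \<le> t \<and> t \<le> s \<and> s \<le> t + T0} (\<lambda>(s,t). Rb k s t a b)"
    and nondeg: "\<And>s t k. 0 \<le> t \<Longrightarrow> t \<le> s \<Longrightarrow> s \<le> t + T0 \<Longrightarrow> k < n \<Longrightarrow> nondegenerate d (Rb k s t)"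
    and bdd: "\<exists>K. \<forall>s t k a b. 0 \<le> t \<longrightarrow> t \<le> s \<longrightarrow> s \<le> t + T0 \<longrightarrow> k < n \<longrightarrow> a < d \<longrightarrow> b < d \<longrightarrow>
                   \<bar>Rb k s t a b\<bar> \<le> K"
  shows "\<exists>C>0. \<forall>t\<ge>0. \<forall>s\<in>{t..t+T0}. \<forall>p :: nat \<Rightarrow> real.
           integral {0..1} (\<lambda>v. vnorm d (tmulv (n*d) (Rbarv d Rb s t v) (scaleM d (s - t) p)) powr \<alpha>)
             \<ge> C * vnorm (n*d) (scaleM d (s - t) p) powr \<alpha>"
proof -
  obtain C where C: "0 < C" and bound: "\<And>t s p. 0 \<le> t \<Longrightarrow> t \<le> s \<Longrightarrow> s \<le> t + 1 \<Longrightarrow>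
      C * vnorm (n*d) (scaleM d (s - t) p) powr \<alpha>
        \<le> integral {0..1} (\<lambda>v. vnorm d (tmulv (n*d) (R s (s - v * (s - t))) p) powr \<alpha>)"
    using resolvent_adjoint_lower_bound[OF dn alpha(1) meas H3 res] by metis
  show ?thesis
  proof (intro exI[of _ C] conjI allI impI ballI)
    show "0 < C" by (fact C)
    fix t s :: real and p :: "nat \<Rightarrow> real" assume t: "0 \<le> t" and s: "s \<in> {t..t + T0}"
    have "tmulv (n*d) (Rbarv d Rb s t v) (scaleM d (s - t) p) b = tmulv (n*d) (R s (s - v * (s - t))) p b"
      if "v \<in> {0..1}" "b < d" for v b
      by (rule Rbarv_adjoint_eq[OF struct t]) (use s that in auto)
    then have "integral {0..1} (\<lambda>v. vnorm d (tmulv (n*d) (Rbarv d Rb s t v) (scaleM d (s - t) p)) powr \<alpha>)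
        = integral {0..1} (\<lambda>v. vnorm d (tmulv (n*d) (R s (s - v * (s - t))) p) powr \<alpha>)"
      by (intro integral_cong arg_cong[where f="\<lambda>x. x powr \<alpha>"] vnorm_cong) auto
    then show "C * vnorm (n*d) (scaleM d (s - t) p) powr \<alpha>
        \<le> integral {0..1} (\<lambda>v. vnorm d (tmulv (n*d) (Rbarv d Rb s t v) (scaleM d (s - t) p)) powr \<alpha>)"
      using bound[of t s p] t s T0 by simp
  qed
qed

end
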